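(* Let $\mathcal{A}$ be a finite-dimensional $C^*$-algebra, $\mathcal{A}^{\mathbb{Z}}$ the quasi-local algebra built from $\mathcal{A}$, and $\psi$ a stationary state on $\mathcal{A}^{\mathbb{Z}}$ with von Neumann entropy rate $s$. Let $(q_n)_{n\in\mathbb{N}}$ be orthogonal projections with $q_n\in\mathcal{A}^n$ and $\lim_{n\to\infty}\psi(q_n)=1$. Then $\lim_{n\to\infty}\frac1n S(q_nD_{\psi^n}q_n)=s$.
   Context: $\mathcal{A}^{\mathbb{Z}}$ is the norm completion of the union of $\mathcal{A}^{\Lambda}=\bigotimes_{i\in\Lambda}\mathcal{A}$ over finite $\Lambda\subset\mathbb{Z}$ with natural embeddings $a\mapsto a\otimes\mathbf{1}$; $\mathcal{A}^n:=\mathcal{A}^{[1,n]}$. The shift $T$ maps $\mathcal{A}^{\Lambda}$ onto $\mathcal{A}^{\Lambda+1}$; $\psi$ is stationary if $\psi\circ T=\psi$. $\psi^n$ is the restriction of $\psi$ to $\mathcal{A}^n$ and $D_{\psi^n}$ its density operator (w.r.t. the trace of $\mathcal{A}^n$ represented as matrices). $S(D)=-\mathrm{tr}(D\log D)$ (also for subnormalized positive $D$), and the entropy rate is $s=\lim_n\frac1nS(D_{\psi^n})$. *)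

theory Defs
  imports "Jordan_Normal_Form.Char_Poly" "HOL-Computational_Algebra.Polynomial"
begin

definition mtrace :: "complex mat \<Rightarrow> complex" where
  "mtrace M = (\<Sum>i<dim_row M. M $$ (i, i))"

definition cadj :: "complex mat \<Rightarrow> complex mat" where
  "cadj M = mat (dim_col M) (dim_row M) (\<lambda>(i, j). cnj (M $$ (j, i)))"

text \<open>Kronecker (tensor) product; the left factor carries the lower site indices.\<close>
definition kron :: "complex mat \<Rightarrow> complex mat \<Rightarrow> complex mat" where
  "kron A B = mat (dim_row A * dim_row B) (dim_col A * dim_col B)
     (\<lambda>(i, j). A $$ (i div dim_row B, j div dim_col B) * B $$ (i mod dim_row B, j mod dim_col B))"

text \<open>A finite-dimensional C*-algebra is (up to *-isomorphism) a direct sum of full matrix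
  algebras M_k1 + ... + M_km. We realise it as the algebra of all block-diagonal
  (sum ks) x (sum ks) complex matrices with diagonal blocks of sizes ks. The matrix trace
  then is the canonical trace (minimal projections have trace 1).\<close>

definition same_block :: "nat list \<Rightarrow> nat \<Rightarrow> nat \<Rightarrow> bool" where
  "same_block ks i j \<longleftrightarrow> (\<exists>b<length ks.
      sum_list (take b ks) \<le> i \<and> i < sum_list (take (Suc b) ks) \<and>
      sum_list (take b ks) \<le> j \<and> j < sum_list (take (Suc b) ks))"

definition blk_alg :: "nat list \<Rightarrow> complex mat set" where
  "blk_alg ks = {M \<in> carrier_mat (sum_list ks) (sum_list ks).
      \<forall>i<sum_list ks. \<forall>j<sum_list ks. \<not> same_block ks i j \<longrightarrow> M $$ (i, j) = 0}"

inductive_set lin_span :: "nat \<Rightarrow> complex mat set \<Rightarrow> complex mat set"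
  for n :: nat and S :: "complex mat set" where
  zero: "0\<^sub>m n n \<in> lin_span n S"
| gen: "x \<in> S \<Longrightarrow> x \<in> lin_span n S"
| add: "x \<in> lin_span n S \<Longrightarrow> y \<in> lin_span n S \<Longrightarrow> x + y \<in> lin_span n S"
| smult: "x \<in> lin_span n S \<Longrightarrow> c \<cdot>\<^sub>m x \<in> lin_span n S"

text \<open>A^n = A^{[1,n]}: the algebraic tensor product of n copies of A, i.e. the span of
  elementary tensors a_1 (x) ... (x) a_n, realised inside (d^n) x (d^n) matrices.\<close>
fun Apow :: "nat list \<Rightarrow> nat \<Rightarrow> complex mat set" where
  "Apow ks 0 = lin_span 1 {1\<^sub>m 1}"
| "Apow ks (Suc n) = lin_span (sum_list ks ^ Suc n)
      {kron X a | X a. X \<in> Apow ks n \<and> a \<in> blk_alg ks}"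

text \<open>A stationary state psi on A^Z is determined by (and corresponds bijectively to)
  the family of its restrictions phi n = psi restricted to A^{[1,n]}, which are states,
  consistent (phi (n+1) (X (x) 1) = phi n X) and shift-invariant
  (phi (n+1) (1 (x) X) = phi n X).\<close>
definition stationary_state :: "nat list \<Rightarrow> (nat \<Rightarrow> complex mat \<Rightarrow> complex) \<Rightarrow> bool" where
  "stationary_state ks phi \<longleftrightarrow>
     (\<forall>n. \<forall>X\<in>Apow ks n. \<forall>Y\<in>Apow ks n. phi n (X + Y) = phi n X + phi n Y) \<and>
     (\<forall>n. \<forall>X\<in>Apow ks n. \<forall>c. phi n (c \<cdot>\<^sub>m X) = c * phi n X) \<and>
     (\<forall>n. \<forall>X\<in>Apow ks n. Im (phi n (cadj X * X)) = 0 \<and> Re (phi n (cadj X * X)) \<ge> 0) \<and>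
     (\<forall>n. phi n (1\<^sub>m (sum_list ks ^ n)) = 1) \<and>
     (\<forall>n. \<forall>X\<in>Apow ks n. phi (Suc n) (kron X (1\<^sub>m (sum_list ks))) = phi n X) \<and>
     (\<forall>n. \<forall>X\<in>Apow ks n. phi (Suc n) (kron (1\<^sub>m (sum_list ks)) X) = phi n X)"

definition density :: "nat list \<Rightarrow> (nat \<Rightarrow> complex mat \<Rightarrow> complex) \<Rightarrow> nat \<Rightarrow> complex mat" where
  "density ks phi n = (THE D. D \<in> Apow ks n \<and> (\<forall>a\<in>Apow ks n. phi n a = mtrace (D * a)))"

definition eta :: "real \<Rightarrow> real" where
  "eta x = (if x \<le> 0 then 0 else - x * ln x)"

text \<open>S(D) = - tr (D log D) = sum over the eigenvalues (with multiplicity) of -lambda ln lambda,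
  for positive (possibly subnormalised) D, with 0 ln 0 = 0.\<close>
definition vN_entropy :: "complex mat \<Rightarrow> real" where
  "vN_entropy D = (\<Sum>\<^sub># (image_mset (\<lambda>z. eta (Re z)) (proots (char_poly D))))"

definition orth_proj :: "complex mat \<Rightarrow> bool" where
  "orth_proj q \<longleftrightarrow> q * q = q \<and> cadj q = q"

end

theory Submission
  imports Defs "Jordan_Normal_Form.Schur_Decomposition"
begin

text \<open>Realise \<open>\<A> \<subseteq> M\<^sub>d\<close>, let \<open>D\<close> be the density matrix of \<open>\<psi>\<^sup>n\<close> and \<open>p = \<psi>(q\<^sub>n)\<close>.
  Diagonalising \<open>D = U diag(\<mu>) U\<^sup>*\<close> reduces everything to compressing a probability vector \<open>\<mu>\<close>
  by a projection. If \<open>V\<close> is a unitary eigenbasis of the compression, its nonzero eigenvalues are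
  \<open>\<lambda>\<^sub>i = \<Sum>\<^sub>j |V\<^sub>j\<^sub>i|\<^sup>2 \<mu>\<^sub>j\<close>, with a doubly stochastic weight matrix, and \<open>\<Sum>\<^sub>i \<lambda>\<^sub>i = p\<close>.
  Concavity of \<open>\<eta>(x) = -x ln x\<close> then gives \<open>S(D) \<le> S(q D q) + (1 - p) n ln d + \<eta>(1 - p)\<close>
  and, with Bessel's inequality, \<open>S(q D q) \<le> S(D) + (1 - p)\<close>. After division by \<open>n\<close> both error
  terms vanish as \<open>p \<rightarrow> 1\<close>. The density matrix is explicit because \<open>\<A>\<^sup>n\<close> is exactly the set of
  matrices supported on the entries admissible for the block structure of \<open>\<A>\<close>, hence spanned by
  matrix units; its positivity is inherited from that of \<open>\<psi>\<close>.\<close>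

lemma eta_zero [simp]: "eta 0 = 0"
  unfolding eta_def by simp

lemma eta_nonneg: "0 \<le> x \<Longrightarrow> x \<le> 1 \<Longrightarrow> 0 \<le> eta x"
  unfolding eta_def by (auto simp: mult_nonneg_nonpos ln_le_zero_iff)

lemma eta_le_tangent:
  assumes x: "x > 0" and y: "y \<ge> 0"
  shows "eta y \<le> eta x - (ln x + 1) * (y - x)"
proof (cases "y = 0")
  case True
  thus ?thesis using x by (simp add: eta_def algebra_simps)
next
  case False
  hence y': "y > 0" using y by simp
  have "ln (x / y) \<le> x / y - 1" using x y' by (intro ln_le_minus_one) auto
  hence "y * ln (x / y) \<le> y * (x / y - 1)" using y' by (intro mult_left_mono) auto
  hence "y * (ln x - ln y) \<le> x - y" using x y' by (simp add: ln_div right_diff_distrib)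
  thus ?thesis using x y' by (simp add: eta_def algebra_simps)
qed

lemma eta_jensen:
  assumes fin: "finite I" and w: "\<And>i. i \<in> I \<Longrightarrow> w i \<ge> 0" and ws: "sum w I \<le> 1"
    and xs: "\<And>i. i \<in> I \<Longrightarrow> x i \<ge> 0"
  shows "(\<Sum>i\<in>I. w i * eta (x i)) \<le> eta (\<Sum>i\<in>I. w i * x i)"
proof -
  define m where "m = (\<Sum>i\<in>I. w i * x i)"
  have m0: "m \<ge> 0" unfolding m_def using w xs by (auto intro: sum_nonneg)
  show ?thesis
  proof (cases "m = 0")
    case True
    have "\<forall>i\<in>I. w i * x i = 0"
      using True fin w xs unfolding m_def by (subst sum_nonneg_eq_0_iff[symmetric]) auto
    hence "(\<Sum>i\<in>I. w i * eta (x i)) = 0" by (intro sum.neutral) auto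
    thus ?thesis using True m_def by simp
  next
    case False
    hence mp: "m > 0" using m0 by simp
    have "(\<Sum>i\<in>I. w i * eta (x i)) \<le> (\<Sum>i\<in>I. w i * (eta m - (ln m + 1) * (x i - m)))"
      using eta_le_tangent[OF mp] w xs by (intro sum_mono mult_left_mono) auto
    also have "\<dots> = (\<Sum>i\<in>I. w i * eta m - (ln m + 1) * (w i * x i) + (ln m + 1) * m * w i)"
      by (intro sum.cong) (auto simp: algebra_simps)
    also have "\<dots> = sum w I * eta m - (ln m + 1) * m + (ln m + 1) * m * sum w I"
      by (simp add: sum.distrib sum_subtractf sum_distrib_left[symmetric]
          sum_distrib_right[symmetric] m_def)
    also have "\<dots> = eta m - (1 - sum w I) * m"
      using mp by (simp add: eta_def algebra_simps)
    also have "\<dots> \<le> eta m" using ws mp by simp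
    finally show ?thesis unfolding m_def .
  qed
qed

lemma eta_mult: "0 \<le> x \<Longrightarrow> 0 \<le> y \<Longrightarrow> eta (x * y) = x * eta y + y * eta x"
proof (cases "x = 0 \<or> y = 0")
  case False
  assume "0 \<le> x" "0 \<le> y"
  hence "x > 0" "y > 0" using False by auto
  moreover have "\<not> x * y \<le> 0" using calculation by (simp add: not_le)
  ultimately show ?thesis by (simp add: eta_def ln_mult algebra_simps)
qed (auto simp: eta_def)

lemma eta_le_one_minus: "0 \<le> c \<Longrightarrow> eta c \<le> 1 - c"
proof (cases "c = 0")
  case False
  assume "0 \<le> c"
  hence cp: "c > 0" using False by simp
  have "ln (1 / c) \<le> 1 / c - 1" using cp by (intro ln_le_minus_one) auto
  hence "c * ln (1 / c) \<le> c * (1 / c - 1)" using cp by (intro mult_left_mono) auto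
  thus ?thesis using cp by (simp add: eta_def ln_div algebra_simps)
qed simp

lemma sum_eta_le_card_eta_mean:
  assumes fin: "finite I" and N: "card I > 0" and t: "\<And>i. i \<in> I \<Longrightarrow> t i \<ge> 0"
  shows "(\<Sum>i\<in>I. eta (t i)) \<le> card I * eta (sum t I / card I)"
proof -
  have "(\<Sum>i\<in>I. (1 / card I) * eta (t i)) \<le> eta (\<Sum>i\<in>I. (1 / card I) * t i)"
    using N t by (intro eta_jensen fin) auto
  hence "(\<Sum>i\<in>I. eta (t i)) / card I \<le> eta (sum t I / card I)"
    by (simp add: sum_distrib_left[symmetric] sum_divide_distrib[symmetric])
  thus ?thesis using N by (simp add: field_simps)
qed

lemma eta_divide_scale: "N > 0 \<Longrightarrow> t \<ge> 0 \<Longrightarrow> N * eta (t / N) = t * ln N + eta t"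
proof (cases "t = 0")
  case False
  assume "N > 0" "t \<ge> 0"
  hence "t > 0" "N > 0" using False by auto
  moreover have "\<not> t / N \<le> 0" using calculation by (simp add: not_le)
  ultimately show ?thesis by (simp add: eta_def ln_div algebra_simps)
qed (simp add: eta_def)

lemma eta_le_sqrt:
  assumes t0: "0 \<le> t"
  shows "eta t \<le> sqrt t"
proof -
  define v where "v = sqrt (sqrt t)"
  have v0: "v \<ge> 0" and vs: "sqrt t = v ^ 2" unfolding v_def using t0 by simp_all
  have "v ^ 4 = (v ^ 2) ^ 2" by simp
  hence vt: "t = v ^ 4" using vs t0 by (metis real_sqrt_pow2)
  show ?thesis
  proof (cases "v = 0")
    case True
    thus ?thesis using vt by simp
  next
    case False
    hence vp: "v > 0" using v0 by simp
    have "ln (1 / v) \<le> 1 / v - 1" using vp by (intro ln_le_minus_one) auto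
    hence l: "- ln v \<le> 1 / v - 1" using vp by (simp add: ln_div)
    have "eta t = 4 * v ^ 4 * (- ln v)" using vt vp by (simp add: eta_def ln_realpow)
    also have "\<dots> \<le> 4 * v ^ 4 * (1 / v - 1)" using l vp by (intro mult_left_mono) auto
    also have "\<dots> = v ^ 2 - v ^ 2 * (2 * v - 1) ^ 2" using vp
      by (simp add: field_simps power2_eq_square power4_eq_xxxx)
    also have "\<dots> \<le> v ^ 2" by simp
    finally show ?thesis using vs by simp
  qed
qed

lemma index_mult_mat_sum:
  assumes "A \<in> carrier_mat n m" "B \<in> carrier_mat m k" "i < n" "j < k"
  shows "(A * B) $$ (i, j) = (\<Sum>l<m. A $$ (i, l) * B $$ (l, j))"
  using assms by (auto simp: scalar_prod_def atLeast0LessThan intro!: sum.cong)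

lemma cadj_carrier [simp]: "A \<in> carrier_mat n m \<Longrightarrow> cadj A \<in> carrier_mat m n"
  unfolding cadj_def by auto

lemma cadj_dims [simp]: "dim_row (cadj A) = dim_col A" "dim_col (cadj A) = dim_row A"
  unfolding cadj_def by auto

lemma cadj_index [simp]:
  "i < dim_col A \<Longrightarrow> j < dim_row A \<Longrightarrow> cadj A $$ (i, j) = cnj (A $$ (j, i))"
  unfolding cadj_def by auto

lemma cadj_cadj [simp]: "cadj (cadj A) = A"
  by (rule eq_matI) auto

lemma cadj_one [simp]: "cadj (1\<^sub>m n) = 1\<^sub>m n"
  by (rule eq_matI) auto

lemma cadj_mult:
  assumes A: "A \<in> carrier_mat n m" and B: "B \<in> carrier_mat m k"
  shows "cadj (A * B) = cadj B * cadj A"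
proof (rule eq_matI)
  fix i j assume "i < dim_row (cadj B * cadj A)" "j < dim_col (cadj B * cadj A)"
  hence i: "i < k" and j: "j < n" using A B by auto
  have "cadj (A * B) $$ (i, j) = cnj ((A * B) $$ (j, i))" using A B i j by auto
  also have "\<dots> = (\<Sum>l<m. cnj (A $$ (j, l)) * cnj (B $$ (l, i)))"
    using index_mult_mat_sum[OF A B j i] by simp
  also have "\<dots> = (\<Sum>l<m. cadj B $$ (i, l) * cadj A $$ (l, j))"
    using A B i j by (intro sum.cong) auto
  also have "\<dots> = (cadj B * cadj A) $$ (i, j)"
    by (rule index_mult_mat_sum[symmetric]) (use A B i j in auto)
  finally show "cadj (A * B) $$ (i, j) = (cadj B * cadj A) $$ (i, j)" .
qed (use A B in auto)

lemma cadj_mult3: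
  assumes "A \<in> carrier_mat n n" "B \<in> carrier_mat n n" "C \<in> carrier_mat n n"
  shows "cadj (A * B * C) = cadj C * cadj B * cadj A"
proof -
  have "cadj (A * B * C) = cadj C * cadj (A * B)"
    using assms by (intro cadj_mult[of "A * B" n n C n]) auto
  also have "cadj (A * B) = cadj B * cadj A" using assms by (intro cadj_mult[of A n n B n])
  finally show ?thesis using assms by (simp add: assoc_mult_mat[of "cadj C" n n "cadj B" n "cadj A" n])
qed

definition unitary :: "nat \<Rightarrow> complex mat \<Rightarrow> bool" where
  "unitary n U \<longleftrightarrow> U \<in> carrier_mat n n \<and> cadj U * U = 1\<^sub>m n \<and> U * cadj U = 1\<^sub>m n"

lemma unitary_carrier: "unitary n U \<Longrightarrow> U \<in> carrier_mat n n"
  unfolding unitary_def by auto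

lemma unitary_cancel:
  assumes U: "unitary n U" and X: "X \<in> carrier_mat n m"
  shows "U * (cadj U * X) = X" "cadj U * (U * X) = X"
proof -
  have Uc: "U \<in> carrier_mat n n" using U unitary_carrier by blast
  have "U * (cadj U * X) = (U * cadj U) * X" using Uc X by (subst assoc_mult_mat) auto
  thus "U * (cadj U * X) = X" using U X unfolding unitary_def by simp
  have "cadj U * (U * X) = (cadj U * U) * X" using Uc X by (subst assoc_mult_mat) auto
  thus "cadj U * (U * X) = X" using U X unfolding unitary_def by simp
qed

lemma unitary_cancel_right:
  assumes U: "unitary n U" and X: "X \<in> carrier_mat m n"
  shows "X * U * cadj U = X" "X * cadj U * U = X"
proof -
  have Uc: "U \<in> carrier_mat n n" using U unitary_carrier by blast
  have "X * U * cadj U = X * (U * cadj U)" "X * cadj U * U = X * (cadj U * U)"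
    using X Uc by (auto intro: assoc_mult_mat[of X m n _ n _ n])
  thus "X * U * cadj U = X" "X * cadj U * U = X" using U X unfolding unitary_def by auto
qed

lemma unitary_conj_cancel:
  assumes U: "unitary n U" and X: "X \<in> carrier_mat n n"
  shows "cadj U * (U * X * cadj U) * U = X"
proof -
  have Uc: "U \<in> carrier_mat n n" using U unitary_carrier by blast
  have "cadj U * (U * X * cadj U) * U = cadj U * (U * X * cadj U * U)"
    using Uc X by (intro assoc_mult_mat[of _ n n _ n _ n]) auto
  also have "U * X * cadj U * U = U * X" using Uc X by (intro unitary_cancel_right[OF U]) auto
  finally show ?thesis using Uc X unitary_cancel(2)[OF U X] by simp
qed

lemma unitary_mult:
  assumes U: "unitary n U" and V: "unitary n V"
  shows "unitary n (U * V)"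
proof -
  have Uc: "U \<in> carrier_mat n n" and Vc: "V \<in> carrier_mat n n"
    using U V unitary_carrier by blast+
  have c: "cadj (U * V) = cadj V * cadj U" using Uc Vc by (rule cadj_mult)
  have "cadj V * cadj U * (U * V) = cadj V * (cadj U * (U * V))"
    using Uc Vc by (subst assoc_mult_mat) auto
  also have "\<dots> = 1\<^sub>m n" using unitary_cancel(2)[OF U Vc] V unfolding unitary_def by simp
  finally have 1: "cadj (U * V) * (U * V) = 1\<^sub>m n" using c by simp
  have "U * V * (cadj V * cadj U) = U * (V * (cadj V * cadj U))"
    using Uc Vc by (subst assoc_mult_mat) auto
  also have "\<dots> = 1\<^sub>m n" using unitary_cancel(1)[OF V cadj_carrier[OF Uc]] U unfolding unitary_def
    by simp
  finally have 2: "U * V * cadj (U * V) = 1\<^sub>m n" using c by simp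
  show ?thesis using 1 2 Uc Vc unfolding unitary_def by auto
qed

lemma unitary_similar:
  assumes U: "unitary n U" and X: "X \<in> carrier_mat n n"
  shows "similar_mat (U * X * cadj U) X"
proof -
  have "similar_mat_wit (U * X * cadj U) X U (cadj U)"
    unfolding similar_mat_wit_def using U X unfolding unitary_def by (auto simp: Let_def)
  thus ?thesis unfolding similar_mat_def by blast
qed

lemma unitary_row_col_norms:
  assumes U: "unitary n U" and j: "j < n"
  shows "(\<Sum>i<n. (cmod (U $$ (j, i)))\<^sup>2) = 1" "(\<Sum>i<n. (cmod (U $$ (i, j)))\<^sup>2) = 1"
proof -
  have Uc: "U \<in> carrier_mat n n" using U unitary_carrier by blast
  have "complex_of_real (\<Sum>i<n. (cmod (U $$ (j, i)))\<^sup>2) = (\<Sum>i<n. U $$ (j, i) * cadj U $$ (i, j))"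
    unfolding of_real_sum using Uc j by (intro sum.cong refl) (simp add: complex_norm_square del: of_real_power)
  also have "\<dots> = (U * cadj U) $$ (j, j)"
    by (rule index_mult_mat_sum[symmetric, OF Uc cadj_carrier[OF Uc] j j])
  also have "\<dots> = 1" using U j unfolding unitary_def by simp
  finally show "(\<Sum>i<n. (cmod (U $$ (j, i)))\<^sup>2) = 1" by (simp only: of_real_eq_1_iff)
  have "complex_of_real (\<Sum>i<n. (cmod (U $$ (i, j)))\<^sup>2) = (\<Sum>i<n. cadj U $$ (j, i) * U $$ (i, j))"
    unfolding of_real_sum using Uc j
    by (intro sum.cong refl) (simp add: complex_norm_square mult.commute del: of_real_power)
  also have "\<dots> = (cadj U * U) $$ (j, j)"
    by (rule index_mult_mat_sum[symmetric, OF cadj_carrier[OF Uc] Uc j j])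
  also have "\<dots> = 1" using U j unfolding unitary_def by simp
  finally show "(\<Sum>i<n. (cmod (U $$ (i, j)))\<^sup>2) = 1" by (simp only: of_real_eq_1_iff)
qed

section \<open>The spectral theorem for Hermitian matrices\<close>

definition border_mat :: "complex \<Rightarrow> complex mat \<Rightarrow> complex mat" where
  "border_mat a M = mat (Suc (dim_row M)) (Suc (dim_col M)) (\<lambda>(i, j).
     if i = 0 \<and> j = 0 then a else if i = 0 \<or> j = 0 then 0 else M $$ (i - 1, j - 1))"

lemma border_mat_carrier [simp]:
  "M \<in> carrier_mat n m \<Longrightarrow> border_mat a M \<in> carrier_mat (Suc n) (Suc m)"
  unfolding border_mat_def by auto

lemma border_mat_dims [simp]:
  "dim_row (border_mat a M) = Suc (dim_row M)" "dim_col (border_mat a M) = Suc (dim_col M)"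
  unfolding border_mat_def by auto

lemma border_mat_index:
  "i < Suc (dim_row M) \<Longrightarrow> j < Suc (dim_col M) \<Longrightarrow> border_mat a M $$ (i, j) =
     (if i = 0 \<and> j = 0 then a else if i = 0 \<or> j = 0 then 0 else M $$ (i - 1, j - 1))"
  unfolding border_mat_def by auto

lemma border_mat_mult:
  assumes M: "M \<in> carrier_mat n m" and N: "N \<in> carrier_mat m k"
  shows "border_mat a M * border_mat b N = border_mat (a * b) (M * N)"
proof (rule eq_matI)
  fix i j assume "i < dim_row (border_mat (a * b) (M * N))" "j < dim_col (border_mat (a * b) (M * N))"
  hence i: "i < Suc n" and j: "j < Suc k" using M N by auto
  have "(border_mat a M * border_mat b N) $$ (i, j) =
      (\<Sum>l<Suc m. border_mat a M $$ (i, l) * border_mat b N $$ (l, j))"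
    by (rule index_mult_mat_sum) (use M N i j in auto)
  also have "\<dots> = border_mat a M $$ (i, 0) * border_mat b N $$ (0, j) +
      (\<Sum>l<m. border_mat a M $$ (i, Suc l) * border_mat b N $$ (Suc l, j))"
    by (rule sum.lessThan_Suc_shift)
  also have "\<dots> = border_mat (a * b) (M * N) $$ (i, j)"
  proof (cases "i = 0 \<or> j = 0")
    case True
    thus ?thesis using M N i j by (auto simp: border_mat_index)
  next
    case False
    then obtain i' j' where "i = Suc i'" "j = Suc j'" by (metis not0_implies_Suc)
    thus ?thesis using M N i j carrier_matD[OF M] carrier_matD[OF N]
      by (simp add: border_mat_index index_mult_mat_sum[OF M N] del: index_mult_mat(1))
  qed
  finally show "(border_mat a M * border_mat b N) $$ (i, j) = border_mat (a * b) (M * N) $$ (i, j)" .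
qed (use M N in auto)

lemma cadj_border_mat: "cadj (border_mat a M) = border_mat (cnj a) (cadj M)"
  by (rule eq_matI) (auto simp: border_mat_index)

lemma border_mat_one: "border_mat 1 (1\<^sub>m n) = 1\<^sub>m (Suc n)"
  by (rule eq_matI) (auto simp: border_mat_index)

lemma unitary_border_mat:
  assumes U: "unitary n U"
  shows "unitary (Suc n) (border_mat 1 U)"
  using U border_mat_mult[of "cadj U" n n U n 1 1] border_mat_mult[of U n n "cadj U" n 1 1]
  unfolding unitary_def by (auto simp: cadj_border_mat border_mat_one)

lemma diagonal_border_mat: "diagonal_mat T \<Longrightarrow> diagonal_mat (border_mat a T)"
  unfolding diagonal_mat_def by (auto simp: border_mat_index)

lemma unitary_of_corthogonal:
  fixes ws :: "complex vec list"
  assumes ws: "set ws \<subseteq> carrier_vec n" and orth: "corthogonal ws" and len: "length ws = n"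
  defines "r \<equiv> \<lambda>j. sqrt (\<Sum>l<n. (cmod (ws ! j $ l))\<^sup>2)"
  shows "unitary n (mat n n (\<lambda>(i, j). ws ! j $ i / complex_of_real (r j)))"
    (is "unitary n ?W")
proof -
  have wsj: "ws ! j \<in> carrier_vec n" if "j < n" for j using ws len that by auto
  have inner: "ws ! k \<bullet>c ws ! j = (\<Sum>l<n. ws ! k $ l * cnj (ws ! j $ l))" if "j < n" "k < n" for j k
    using wsj[OF that(1)] wsj[OF that(2)] by (auto simp: scalar_prod_def atLeast0LessThan
        intro!: sum.cong)
  have rr: "complex_of_real (r j * r j) = ws ! j \<bullet>c ws ! j" if j: "j < n" for j
  proof -
    have "r j * r j = (\<Sum>l<n. (cmod (ws ! j $ l))\<^sup>2)" unfolding r_def by (simp add: sum_nonneg)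
    thus ?thesis unfolding inner[OF j j] by (simp add: complex_norm_square del: of_real_power)
  qed
  have r0: "r j \<noteq> 0" if j: "j < n" for j
    using rr[OF j] corthogonalD[OF orth, of j j] len j by fastforce
  have "cadj ?W * ?W = 1\<^sub>m n"
  proof (rule eq_matI)
    fix j k assume "j < dim_row (1\<^sub>m n)" "k < dim_col (1\<^sub>m n)"
    hence j: "j < n" and k: "k < n" by auto
    have "(cadj ?W * ?W) $$ (j, k) = (\<Sum>l<n. cadj ?W $$ (j, l) * ?W $$ (l, k))"
      by (rule index_mult_mat_sum) (use j k in auto)
    also have "\<dots> = (\<Sum>l<n. ws ! k $ l * cnj (ws ! j $ l) / complex_of_real (r j * r k))"
      using j k by (intro sum.cong refl) (auto simp: mult.commute)
    also have "\<dots> = (ws ! k \<bullet>c ws ! j) / complex_of_real (r j * r k)"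
      unfolding inner[OF j k] by (rule sum_divide_distrib[symmetric])
    also have "\<dots> = 1\<^sub>m n $$ (j, k)"
      using rr[OF j] r0[OF j] corthogonalD[OF orth, of k j] len j k by auto
    finally show "(cadj ?W * ?W) $$ (j, k) = 1\<^sub>m n $$ (j, k)" .
  qed auto
  moreover have "?W * cadj ?W = 1\<^sub>m n"
    using mat_mult_left_right_inverse[OF cadj_carrier _ calculation] by auto
  ultimately show ?thesis unfolding unitary_def by auto
qed

lemma unitary_first_col:
  fixes v :: "complex vec"
  assumes v: "v \<in> carrier_vec (Suc n)" and v0: "v \<noteq> 0\<^sub>v (Suc n)"
  obtains W c where "unitary (Suc n) W" "\<And>i. i < Suc n \<Longrightarrow> W $$ (i, 0) = c * v $ i"
proof -
  interpret cof_vec_space "Suc n" "TYPE(complex)" .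
  define b where "b = basis_completion v"
  from basis_completion[OF v v0, folded b_def]
  have b: "set b \<subseteq> carrier_vec (Suc n)" and dist_b: "distinct b"
    and indep: "\<not> lin_dep (set b)" and len_b: "length b = Suc n" and hdb: "hd b = v" by auto
  from hdb len_b obtain vs where bv: "b = v # vs" by (cases b) auto
  define ws where "ws = gram_schmidt (Suc n) b"
  from gram_schmidt_result[OF b dist_b indep ws_def]
  have ws: "set ws \<subseteq> carrier_vec (Suc n)" "corthogonal ws" "length ws = Suc n"
    using len_b by auto
  have "hd ws = v" unfolding ws_def bv using v by simp
  hence "ws ! 0 = v" using ws(3) by (cases ws) auto
  thus ?thesis
    by (intro that[OF unitary_of_corthogonal[OF ws],
          of "1 / complex_of_real (sqrt (\<Sum>l<Suc n. (cmod (v $ l))\<^sup>2))"]) auto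
qed

lemma eigenvector_exists:
  fixes A :: "complex mat"
  assumes A: "A \<in> carrier_mat (Suc n) (Suc n)"
  obtains v e where "v \<in> carrier_vec (Suc n)" "v \<noteq> 0\<^sub>v (Suc n)" "A *\<^sub>v v = e \<cdot>\<^sub>v v"
proof -
  have "\<not> constant (poly (char_poly A))"
    using degree_monic_char_poly[OF A] by (simp add: constant_degree)
  then obtain e where "poly (char_poly A) e = 0" using fundamental_theorem_of_algebra by blast
  hence "eigenvalue A e" by (simp add: eigenvalue_root_char_poly[OF A])
  from find_eigenvector[OF A this] that A show ?thesis unfolding eigenvector_def by auto
qed

lemma unitary_conj_eigen_first_col:
  assumes A: "A \<in> carrier_mat n n" and W: "unitary n W" and i: "i < n"
    and Av: "A *\<^sub>v v = e \<cdot>\<^sub>v v" and v: "v \<in> carrier_vec n"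
    and Wv: "\<And>k. k < n \<Longrightarrow> W $$ (k, 0) = c * v $ k"
  shows "(cadj W * A * W) $$ (i, 0) = (if i = 0 then e else 0)"
proof -
  have Wc: "W \<in> carrier_mat n n" using W unitary_carrier by blast
  have n: "0 < n" using i by simp
  have AW: "(A * W) $$ (k, 0) = e * W $$ (k, 0)" if k: "k < n" for k
  proof -
    have "(A * W) $$ (k, 0) = (\<Sum>l<n. A $$ (k, l) * W $$ (l, 0))"
      by (rule index_mult_mat_sum[OF A Wc k n])
    also have "\<dots> = c * (\<Sum>l<n. A $$ (k, l) * v $ l)"
      using Wv by (simp add: sum_distrib_left algebra_simps)
    also have "(\<Sum>l<n. A $$ (k, l) * v $ l) = (A *\<^sub>v v) $ k"
      using A v k by (auto simp: scalar_prod_def atLeast0LessThan intro!: sum.cong)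
    also have "\<dots> = e * v $ k" using Av v k by simp
    finally show ?thesis using Wv k by simp
  qed
  have "(cadj W * A * W) $$ (i, 0) = (cadj W * (A * W)) $$ (i, 0)"
    using Wc A by (simp only: assoc_mult_mat[of "cadj W" n n A n W n] cadj_carrier)
  also have "\<dots> = (\<Sum>k<n. cadj W $$ (i, k) * (A * W) $$ (k, 0))"
    by (rule index_mult_mat_sum) (use Wc A i n in auto)
  also have "\<dots> = e * (\<Sum>k<n. cadj W $$ (i, k) * W $$ (k, 0))"
    using AW by (simp add: sum_distrib_left algebra_simps)
  also have "(\<Sum>k<n. cadj W $$ (i, k) * W $$ (k, 0)) = (cadj W * W) $$ (i, 0)"
    by (rule index_mult_mat_sum[symmetric]) (use Wc i n in auto)
  finally have "(cadj W * A * W) $$ (i, 0) = e * (cadj W * W) $$ (i, 0)" .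
  thus ?thesis using W i unfolding unitary_def by simp
qed

lemma hermitian_border_mat:
  assumes B: "B \<in> carrier_mat (Suc n) (Suc n)" and Bh: "cadj B = B"
    and B0: "\<And>i. i < Suc n \<Longrightarrow> B $$ (i, 0) = (if i = 0 then e else 0)"
  defines "B' \<equiv> mat n n (\<lambda>(i, j). B $$ (Suc i, Suc j))"
  shows "B = border_mat e B'" and "cadj B' = B'"
proof -
  have Bij: "B $$ (i, j) = cnj (B $$ (j, i))" if "i < Suc n" "j < Suc n" for i j
    using arg_cong[OF Bh, of "\<lambda>M. M $$ (i, j)"] B that by simp
  show "B = border_mat e B'"
  proof (rule eq_matI)
    fix i j assume "i < dim_row (border_mat e B')" "j < dim_col (border_mat e B')"
    hence i: "i < Suc n" and j: "j < Suc n" by (auto simp: B'_def)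
    have "cnj e = e" using Bij[of 0 0] B0[of 0] by simp
    thus "B $$ (i, j) = border_mat e B' $$ (i, j)"
      using B0 Bij[OF i j] i j by (auto simp: border_mat_index B'_def B0[OF i])
  qed (use B in \<open>auto simp: B'_def\<close>)
  show "cadj B' = B'"
  proof (rule eq_matI)
    fix i j assume "i < dim_row B'" "j < dim_col B'"
    thus "cadj B' $$ (i, j) = B' $$ (i, j)" using Bij[of "Suc i" "Suc j"] by (simp add: B'_def)
  qed (auto simp: B'_def)
qed

lemma hermitian_unitary_deflation:
  assumes A: "A \<in> carrier_mat (Suc n) (Suc n)" and Ah: "cadj A = A"
  obtains W e B where "unitary (Suc n) W" "B \<in> carrier_mat n n" "cadj B = B"
    "A = W * border_mat e B * cadj W"
proof -
  obtain v e where v: "v \<in> carrier_vec (Suc n)" "v \<noteq> 0\<^sub>v (Suc n)" and Av: "A *\<^sub>v v = e \<cdot>\<^sub>v v"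
    using eigenvector_exists[OF A] by blast
  obtain W c where W: "unitary (Suc n) W" and Wv: "\<And>i. i < Suc n \<Longrightarrow> W $$ (i, 0) = c * v $ i"
    using unitary_first_col[OF v] by blast
  have Wc: "W \<in> carrier_mat (Suc n) (Suc n)" using W unitary_carrier by blast
  define B where "B = cadj W * A * W"
  have Bc: "B \<in> carrier_mat (Suc n) (Suc n)" unfolding B_def using Wc A by auto
  have Bh: "cadj B = B" unfolding B_def using cadj_mult3[OF cadj_carrier[OF Wc] A Wc] Ah by simp
  define B' where "B' = mat n n (\<lambda>(i, j). B $$ (Suc i, Suc j))"
  have border: "B = border_mat e B'" "cadj B' = B'"
    using hermitian_border_mat[OF Bc Bh unitary_conj_eigen_first_col[OF A W _ Av v(1) Wv,
          folded B_def]] unfolding B'_def by blast+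
  have "W * B * cadj W = W * (cadj W * (A * (W * cadj W)))"
    unfolding B_def using A Wc
    by (simp add: assoc_mult_mat[of _ "Suc n" "Suc n" _ "Suc n" _ "Suc n"]
        mult_carrier_mat[of _ "Suc n" "Suc n"])
  hence "A = W * B * cadj W" using A W unitary_cancel[OF W A] by (simp add: unitary_def)
  with border W show ?thesis by (intro that[of W B' e]) (auto simp: B'_def)
qed

theorem hermitian_spectral:
  assumes "A \<in> carrier_mat n n" "cadj A = A"
  obtains U T where "unitary n U" "T \<in> carrier_mat n n" "diagonal_mat T" "A = U * T * cadj U"
  using assms
proof (induction n arbitrary: A thesis)
  case 0
  have "unitary 0 (1\<^sub>m 0)" and "diagonal_mat A" using 0 by (auto simp: unitary_def diagonal_mat_def)
  thus ?case using 0 by (metis cadj_one left_mult_one_mat right_mult_one_mat)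
next
  case (Suc n A)
  obtain W e B where W: "unitary (Suc n) W" and B: "B \<in> carrier_mat n n" "cadj B = B"
    and AWB: "A = W * border_mat e B * cadj W"
    using hermitian_unitary_deflation[OF Suc.prems(2,3)] by blast
  obtain U' T' where U': "unitary n U'" and T': "T' \<in> carrier_mat n n" "diagonal_mat T'"
    and BUT: "B = U' * T' * cadj U'"
    using Suc.IH[OF _ B] by blast
  have U'c: "U' \<in> carrier_mat n n" using U' unitary_carrier by blast
  have Wc: "W \<in> carrier_mat (Suc n) (Suc n)" using W unitary_carrier by blast
  define U where "U = W * border_mat 1 U'"
  have "border_mat e B = border_mat 1 U' * border_mat e T' * border_mat 1 (cadj U')"
    unfolding BUT using U'c T' by (simp add: border_mat_mult[of _ n n _ n])
  hence "A = U * border_mat e T' * cadj U"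
    unfolding AWB U_def using Wc U'c T'
    by (simp add: cadj_mult[of W "Suc n" "Suc n" _ "Suc n"] cadj_border_mat
        assoc_mult_mat[of _ "Suc n" "Suc n" _ "Suc n" _ "Suc n"] mult_carrier_mat[of _ "Suc n" "Suc n"])
  moreover have "unitary (Suc n) U" unfolding U_def by (rule unitary_mult[OF W unitary_border_mat[OF U']])
  ultimately show ?case
    using T' by (intro Suc.prems(1)[of U "border_mat e T'"]) (auto intro: diagonal_border_mat)
qed

lemma proots_prod_linear_factors: "proots (\<Prod>a\<leftarrow>xs. [:- a, 1:]) = mset (xs :: complex list)"
proof (induction xs)
  case (Cons a xs)
  have nz: "(\<Prod>b\<leftarrow>xs. [:- b, 1:]) \<noteq> (0 :: complex poly)"
    by (simp only: prod_list_zero_iff) auto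
  have "proots (\<Prod>b\<leftarrow>a # xs. [:- b, 1:]) = proots [:- a, 1:] + proots (\<Prod>b\<leftarrow>xs. [:- b, 1:])"
    unfolding list.map prod_list.Cons by (rule proots_mult[OF _ nz]) simp
  also have "proots [:- a, 1:] = {#a#}" using proots_linear_factor[of "-a"] by simp
  finally show ?case using Cons.IH by simp
qed simp

lemma vN_entropy_similar: "similar_mat A B \<Longrightarrow> vN_entropy A = vN_entropy B"
  unfolding vN_entropy_def by (simp add: char_poly_similar)

lemma vN_entropy_diagonal:
  assumes T: "T \<in> carrier_mat n n" and Td: "diagonal_mat T"
  shows "vN_entropy T = (\<Sum>i<n. eta (Re (T $$ (i, i))))"
proof -
  have "upper_triangular T" using Td T unfolding diagonal_mat_def upper_triangular_def by auto
  hence "proots (char_poly T) = mset (diag_mat T)"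
    by (simp add: char_poly_upper_triangular[OF T] proots_prod_linear_factors)
  hence "vN_entropy T = sum_list (map (\<lambda>z. eta (Re z)) (diag_mat T))"
    unfolding vN_entropy_def by (metis mset_map sum_mset_sum_list)
  also have "\<dots> = (\<Sum>i<n. eta (Re (T $$ (i, i))))"
    using T unfolding diag_mat_def by (simp add: sum_list_distinct_conv_sum_set atLeast0LessThan o_def)
  finally show ?thesis .
qed

lemma vN_entropy_unitary_conj:
  "unitary n U \<Longrightarrow> X \<in> carrier_mat n n \<Longrightarrow> vN_entropy (U * X * cadj U) = vN_entropy X"
  by (intro vN_entropy_similar unitary_similar)

section \<open>Compressing a probability vector\<close>

lemma sum_eta_doubly_stochastic:
  fixes mu :: "nat \<Rightarrow> real" and w :: "nat \<Rightarrow> nat \<Rightarrow> real"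
  assumes mu0: "\<And>j. j < N \<Longrightarrow> mu j \<ge> 0" and w0: "\<And>i j. i < N \<Longrightarrow> j < N \<Longrightarrow> w i j \<ge> 0"
    and wrow: "\<And>j. j < N \<Longrightarrow> (\<Sum>i<N. w i j) = 1"
    and wcol: "\<And>i. i < N \<Longrightarrow> (\<Sum>j<N. w i j) = 1"
  shows "(\<Sum>j<N. eta (mu j)) \<le> (\<Sum>i<N. eta (\<Sum>j<N. w i j * mu j))"
proof -
  have "(\<Sum>j<N. eta (mu j)) = (\<Sum>j<N. \<Sum>i<N. w i j * eta (mu j))"
    using wrow by (simp add: sum_distrib_right[symmetric])
  also have "\<dots> = (\<Sum>i<N. \<Sum>j<N. w i j * eta (mu j))" by (rule sum.swap)
  also have "\<dots> \<le> (\<Sum>i<N. eta (\<Sum>j<N. w i j * mu j))"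
    using w0 wcol mu0 by (intro sum_mono eta_jensen) auto
  finally show ?thesis .
qed

lemma compressed_entropy_lower_bound:
  fixes mu lam :: "nat \<Rightarrow> real" and w :: "nat \<Rightarrow> nat \<Rightarrow> real"
  assumes mu0: "\<And>j. j < N \<Longrightarrow> mu j \<ge> 0" and mu1: "(\<Sum>j<N. mu j) = 1"
    and w0: "\<And>i j. i < N \<Longrightarrow> j < N \<Longrightarrow> w i j \<ge> 0"
    and wrow: "\<And>j. j < N \<Longrightarrow> (\<Sum>i<N. w i j) = 1"
    and wcol: "\<And>i. i < N \<Longrightarrow> (\<Sum>j<N. w i j) = 1"
    and lam0: "\<And>i. i < N \<Longrightarrow> lam i \<ge> 0"
    and lamw: "\<And>i. i < N \<Longrightarrow> lam i > 0 \<Longrightarrow> lam i = (\<Sum>j<N. w i j * mu j)"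
  defines "p \<equiv> (\<Sum>i<N. lam i)"
  shows "(\<Sum>j<N. eta (mu j)) \<le> (\<Sum>i<N. eta (lam i)) + real N * eta ((1 - p) / real N)"
    and "p \<le> 1"
proof -
  define delta where "delta i = (\<Sum>j<N. w i j * mu j)" for i
  define t where "t i = delta i - lam i" for i
  have split: "lam i = delta i \<and> t i = 0 \<or> lam i = 0 \<and> t i = delta i" if "i < N" for i
    using lam0[OF that] lamw[OF that] unfolding t_def delta_def by force
  have t0: "t i \<ge> 0" if "i < N" for i
    using split[OF that] w0 mu0 that unfolding delta_def by (auto intro!: sum_nonneg)
  have "(\<Sum>i<N. delta i) = 1"
    unfolding delta_def using wrow mu1 by (subst sum.swap) (simp add: sum_distrib_right[symmetric])
  hence sumt: "(\<Sum>i<N. t i) = 1 - p" unfolding t_def p_def by (simp add: sum_subtractf)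
  show "p \<le> 1" using sumt t0 by (metis diff_ge_0_iff_ge sum_nonneg lessThan_iff)
  have "(\<Sum>j<N. eta (mu j)) \<le> (\<Sum>i<N. eta (delta i))"
    unfolding delta_def by (rule sum_eta_doubly_stochastic[OF mu0 w0 wrow wcol])
  also have "\<dots> = (\<Sum>i<N. eta (lam i)) + (\<Sum>i<N. eta (t i))"
    unfolding sum.distrib[symmetric] by (intro sum.cong refl) (use split in fastforce)
  also have "(\<Sum>i<N. eta (t i)) \<le> real N * eta ((1 - p) / real N)"
  proof (cases "N = 0")
    case False
    thus ?thesis using sum_eta_le_card_eta_mean[of "{..<N}" t] t0 sumt by simp
  qed simp
  finally show "(\<Sum>j<N. eta (mu j)) \<le> (\<Sum>i<N. eta (lam i)) + real N * eta ((1 - p) / real N)"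
    by simp
qed

lemma eta_mult_le:
  assumes "0 \<le> x" "x \<le> 1" "0 \<le> c" "c \<le> 1"
  shows "eta (x * c) \<le> eta x + x * (1 - c)"
proof -
  have "eta (x * c) = x * eta c + c * eta x" using assms by (intro eta_mult) auto
  also have "x * eta c \<le> x * (1 - c)" using assms eta_le_one_minus by (intro mult_left_mono) auto
  also have "c * eta x \<le> 1 * eta x" using assms eta_nonneg by (intro mult_right_mono) auto
  finally show ?thesis by simp
qed

text \<open>The hypothesis \<open>bessel\<close> is Bessel's inequality for the vectors
  \<open>(sqrt (mu l / lam i) * V $$ (l, i))\<^sub>l\<close>, which are orthonormal in the application.\<close>

lemma compressed_entropy_upper_bound:
  fixes mu lam :: "nat \<Rightarrow> real" and w :: "nat \<Rightarrow> nat \<Rightarrow> real"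
  assumes mu0: "\<And>j. j < N \<Longrightarrow> mu j \<ge> 0" and mu1: "(\<Sum>j<N. mu j) = 1"
    and w0: "\<And>i j. i < N \<Longrightarrow> j < N \<Longrightarrow> w i j \<ge> 0"
    and wrow: "\<And>j. j < N \<Longrightarrow> (\<Sum>i<N. w i j) = 1"
    and lam0: "\<And>i. i < N \<Longrightarrow> lam i \<ge> 0"
    and lamw: "\<And>i. i < N \<Longrightarrow> lam i > 0 \<Longrightarrow> lam i = (\<Sum>j<N. w i j * mu j)"
    and bessel: "\<And>j. j < N \<Longrightarrow> (\<Sum>i\<in>{i. i < N \<and> lam i > 0}. w i j * mu j / lam i) \<le> 1"
  shows "(\<Sum>i<N. eta (lam i)) \<le> (\<Sum>j<N. eta (mu j)) + (1 - (\<Sum>i<N. lam i))"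
proof -
  define I where "I = {i. i < N \<and> lam i > 0}"
  define c where "c j = (\<Sum>i\<in>I. w i j)" for j
  have finI: "finite I" and IN: "I \<subseteq> {..<N}" unfolding I_def by auto
  have mu_le1: "mu j \<le> 1" if "j < N" for j
    using member_le_sum[of j "{..<N}" mu] mu0 mu1 that by auto
  have c0: "c j \<ge> 0" and c1: "c j \<le> 1" if "j < N" for j
    using sum_mono2[OF _ IN, of "\<lambda>i. w i j"] w0 wrow that IN unfolding c_def
    by (auto intro!: sum_nonneg)
  have sumI: "(\<Sum>i<N. f i) = (\<Sum>i\<in>I. f i)" if "\<And>i. i < N \<Longrightarrow> lam i = 0 \<Longrightarrow> f i = 0" for f
    using that lam0 IN by (intro sum.mono_neutral_right) (auto simp: I_def order.strict_iff_order)
  have "(\<Sum>i\<in>I. eta (lam i)) = (\<Sum>i\<in>I. (\<Sum>j<N. w i j * mu j / lam i) * eta (lam i))"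
    using lamw by (intro sum.cong refl) (auto simp: I_def sum_divide_distrib[symmetric])
  also have "\<dots> = (\<Sum>j<N. \<Sum>i\<in>I. (w i j * mu j / lam i) * eta (lam i))"
    by (subst sum.swap) (simp add: sum_distrib_right)
  also have "\<dots> \<le> (\<Sum>j<N. eta (\<Sum>i\<in>I. (w i j * mu j / lam i) * lam i))"
    using bessel mu0 w0 IN by (intro sum_mono eta_jensen finI) (auto simp: I_def)
  also have "\<dots> = (\<Sum>j<N. eta (mu j * c j))"
    unfolding c_def sum_distrib_left by (intro sum.cong refl arg_cong[where f = eta]) (auto simp: I_def)
  also have "\<dots> \<le> (\<Sum>j<N. eta (mu j) + mu j * (1 - c j))"
    using mu0 mu_le1 c0 c1 by (intro sum_mono eta_mult_le) auto
  also have "\<dots> = (\<Sum>j<N. eta (mu j)) + (1 - (\<Sum>j<N. mu j * c j))"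
    using mu1 by (simp add: sum.distrib algebra_simps sum_subtractf)
  also have "(\<Sum>j<N. mu j * c j) = (\<Sum>i\<in>I. lam i)"
    unfolding c_def sum_distrib_left using lamw
    by (subst sum.swap) (auto simp: I_def mult.commute intro!: sum.cong)
  finally show ?thesis using sumI[of lam] sumI[of "\<lambda>i. eta (lam i)"] by simp
qed

definition real_diag_mat :: "nat \<Rightarrow> (nat \<Rightarrow> real) \<Rightarrow> complex mat" where
  "real_diag_mat N mu = mat N N (\<lambda>(i, j). if i = j then complex_of_real (mu i) else 0)"

lemma real_diag_mat_carrier [simp]: "real_diag_mat N mu \<in> carrier_mat N N"
  unfolding real_diag_mat_def by simp

lemma diagonal_real_diag_mat: "diagonal_mat (real_diag_mat N mu)"
  unfolding real_diag_mat_def diagonal_mat_def by auto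

lemma cadj_real_diag_mat: "cadj (real_diag_mat N mu) = real_diag_mat N mu"
  unfolding real_diag_mat_def by (rule eq_matI) auto

lemma index_mult_diagonal_right:
  assumes T: "T \<in> carrier_mat n n" and Td: "diagonal_mat T" and X: "X \<in> carrier_mat m n"
    and j: "j < m" and i: "i < n"
  shows "(X * T) $$ (j, i) = X $$ (j, i) * T $$ (i, i)"
proof -
  have "(X * T) $$ (j, i) = (\<Sum>k<n. X $$ (j, k) * T $$ (k, i))" by (rule index_mult_mat_sum[OF X T j i])
  also have "\<dots> = (\<Sum>k<n. if k = i then X $$ (j, i) * T $$ (i, i) else 0)"
    using Td T i unfolding diagonal_mat_def by (intro sum.cong refl) auto
  finally show ?thesis using i by simp
qed

lemma bessel_inequality:
  fixes a :: "nat \<Rightarrow> nat \<Rightarrow> complex"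
  assumes fin: "finite I"
    and orth: "\<And>i k. i \<in> I \<Longrightarrow> k \<in> I \<Longrightarrow> (\<Sum>l<N. cnj (a i l) * a k l) = (if i = k then 1 else 0)"
    and j: "j < N"
  shows "(\<Sum>i\<in>I. (cmod (a i j))\<^sup>2) \<le> 1"
proof -
  define c where "c = (\<Sum>i\<in>I. (cmod (a i j))\<^sup>2)"
  have c0: "c \<ge> 0" unfolding c_def by (intro sum_nonneg) auto
  have norm_sq: "z * cnj z = complex_of_real ((cmod z)\<^sup>2)" for z
    by (rule complex_norm_square[symmetric])
  \<comment> \<open>Up to conjugation, \<open>P\<close> is the projection of the \<open>j\<close>-th unit vector onto the span of the \<open>a i\<close>:
    its squared norm and its \<open>j\<close>-th entry both equal \<open>c\<close>, whence \<open>c\<^sup>2 \<le> c\<close>.\<close>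
  define P where "P l = (\<Sum>i\<in>I. a i j * cnj (a i l))" for l
  have "(\<Sum>l<N. P l * cnj (P l))
      = (\<Sum>l<N. \<Sum>i\<in>I. \<Sum>k\<in>I. (a i j * cnj (a k j)) * (cnj (a i l) * a k l))"
    unfolding P_def cnj_sum complex_cnj_mult complex_cnj_cnj sum_product
    by (intro sum.cong refl) (simp only: mult_ac)
  also have "\<dots> = (\<Sum>i\<in>I. \<Sum>k\<in>I. (a i j * cnj (a k j)) * (\<Sum>l<N. cnj (a i l) * a k l))"
    unfolding sum_distrib_left by (subst sum.swap, rule sum.cong[OF refl], rule sum.swap)
  also have "\<dots> = (\<Sum>i\<in>I. \<Sum>k\<in>I. if k = i then a i j * cnj (a i j) else 0)"
    using orth by (intro sum.cong refl) auto
  also have "\<dots> = (\<Sum>i\<in>I. a i j * cnj (a i j))" using fin by simp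
  finally have "complex_of_real (\<Sum>l<N. (cmod (P l))\<^sup>2) = complex_of_real c"
    unfolding c_def of_real_sum norm_sq[symmetric] .
  hence sumP: "(\<Sum>l<N. (cmod (P l))\<^sup>2) = c" by (simp only: of_real_eq_iff)
  have "P j = complex_of_real c" unfolding P_def c_def of_real_sum norm_sq ..
  hence "c\<^sup>2 = (cmod (P j))\<^sup>2" using c0 by simp
  also have "\<dots> \<le> c" using j sumP[symmetric] member_le_sum[of j "{..<N}" "\<lambda>l. (cmod (P l))\<^sup>2"] by simp
  finally have "c * c \<le> c * 1" by (simp add: power2_eq_square)
  thus ?thesis using c0 unfolding c_def[symmetric]
    by (cases "c = 0") (auto simp: mult_le_cancel_left_pos)
qed

context
  fixes N :: nat and mu :: "nat \<Rightarrow> real" and q V T :: "complex mat"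
  assumes mu0: "\<And>j. j < N \<Longrightarrow> mu j \<ge> 0"
    and q: "q \<in> carrier_mat N N" and qq: "q * q = q" and qh: "cadj q = q"
    and V: "unitary N V" and T: "T \<in> carrier_mat N N" and Td: "diagonal_mat T"
    and decomp: "q * real_diag_mat N mu * q = V * T * cadj V"
begin

lemma compression_entry:
  assumes i: "i < N" and k: "k < N"
  shows "T $$ (i, k) = (\<Sum>l<N. cnj ((q * V) $$ (l, i)) * complex_of_real (mu l) * (q * V) $$ (l, k))"
proof -
  let ?L = "real_diag_mat N mu" and ?Q = "q * V"
  have Vc: "V \<in> carrier_mat N N" using V unitary_carrier by blast
  have Qc: "?Q \<in> carrier_mat N N" using q Vc by simp
  have "T = cadj V * (V * T * cadj V) * V" by (rule unitary_conj_cancel[OF V T, symmetric])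
  also have "\<dots> = cadj ?Q * ?L * ?Q"
    unfolding decomp[symmetric] cadj_mult[OF q Vc] qh using q Vc
    by (simp add: assoc_mult_mat[of _ N N _ N _ N] mult_carrier_mat[of _ N N])
  finally have "T $$ (i, k) = (\<Sum>l<N. (cadj ?Q * ?L) $$ (i, l) * ?Q $$ (l, k))"
    using Qc i k by (simp only: index_mult_mat_sum[of _ N N _ N] mult_carrier_mat[of _ N N]
        cadj_carrier real_diag_mat_carrier)
  also have "\<dots> = (\<Sum>l<N. cnj (?Q $$ (l, i)) * complex_of_real (mu l) * ?Q $$ (l, k))"
  proof (intro sum.cong refl)
    fix l assume "l \<in> {..<N}"
    thus "(cadj ?Q * ?L) $$ (i, l) * ?Q $$ (l, k) = cnj (?Q $$ (l, i)) * complex_of_real (mu l) * ?Q $$ (l, k)"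
      using index_mult_diagonal_right[OF real_diag_mat_carrier diagonal_real_diag_mat
          cadj_carrier[OF Qc] i, of l mu] carrier_matD[OF Qc] i by (simp add: real_diag_mat_def)
  qed
  finally show ?thesis .
qed

lemma compression_eigenvalue:
  assumes i: "i < N"
  shows "T $$ (i, i) = complex_of_real (\<Sum>l<N. mu l * (cmod ((q * V) $$ (l, i)))\<^sup>2)"
  unfolding compression_entry[OF i i] of_real_sum
  by (intro sum.cong refl) (simp add: complex_norm_square mult_ac del: of_real_power)

lemma compression_eigenvector:
  assumes j: "j < N" and i: "i < N" and Ti: "T $$ (i, i) \<noteq> 0"
  shows "(q * V) $$ (j, i) = V $$ (j, i)"
proof -
  let ?A = "q * real_diag_mat N mu * q"
  have Vc: "V \<in> carrier_mat N N" using V unitary_carrier by blast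
  have "q * ?A = q * q * real_diag_mat N mu * q"
    using q by (simp add: assoc_mult_mat[of _ N N _ N _ N] mult_carrier_mat[of _ N N])
  hence qA: "q * ?A = ?A" by (simp only: qq)
  have Ac: "?A \<in> carrier_mat N N" using q by (simp add: mult_carrier_mat[of _ N N])
  have VT: "V * T = ?A * V"
    unfolding decomp using T Vc V[unfolded unitary_def]
    by (simp add: assoc_mult_mat[of _ N N _ N _ N] mult_carrier_mat[of _ N N])
  have "q * V * T = q * (?A * V)" unfolding VT[symmetric] by (rule assoc_mult_mat[OF q Vc T])
  also have "\<dots> = q * ?A * V" by (rule assoc_mult_mat[OF q Ac Vc, symmetric])
  also have "\<dots> = V * T" by (simp only: qA VT)
  finally have "q * V * T = V * T" .
  hence "(q * V) $$ (j, i) * T $$ (i, i) = V $$ (j, i) * T $$ (i, i)"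
    using index_mult_diagonal_right[OF T Td _ j i, of "q * V"]
      index_mult_diagonal_right[OF T Td Vc j i] q Vc by (metis mult_carrier_mat)
  thus ?thesis using Ti by simp
qed

lemma compression_bessel:
  assumes j: "j < N"
  shows "(\<Sum>i\<in>{i. i < N \<and> Re (T $$ (i, i)) > 0}. (cmod (V $$ (j, i)))\<^sup>2 * mu j / Re (T $$ (i, i))) \<le> 1"
proof -
  define I where "I = {i. i < N \<and> Re (T $$ (i, i)) > 0}"
  define lam where "lam i = Re (T $$ (i, i))" for i
  have Tlam: "T $$ (i, i) = complex_of_real (lam i)" if "i < N" for i
    unfolding lam_def compression_eigenvalue[OF that] by simp
  define a where "a i l = complex_of_real (sqrt (mu l / lam i)) * V $$ (l, i)" for i l
  have "(\<Sum>l<N. cnj (a i l) * a k l) = (if i = k then 1 else 0)" if "i \<in> I" "k \<in> I" for i k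
  proof -
    have i: "i < N" "lam i > 0" and k: "k < N" "lam k > 0" using that unfolding I_def lam_def by auto
    have "(\<Sum>l<N. cnj (a i l) * a k l) = complex_of_real (1 / sqrt (lam i * lam k)) *
        (\<Sum>l<N. cnj ((q * V) $$ (l, i)) * complex_of_real (mu l) * (q * V) $$ (l, k))"
      unfolding sum_distrib_left
    proof (intro sum.cong refl)
      fix l assume "l \<in> {..<N}"
      hence l: "l < N" by simp
      have sq: "sqrt (mu l / lam i) * sqrt (mu l / lam k) = 1 / sqrt (lam i * lam k) * mu l"
        using mu0[OF l] i k by (simp add: real_sqrt_mult[symmetric] real_sqrt_divide)
      have "cnj (a i l) * a k l = complex_of_real (sqrt (mu l / lam i) * sqrt (mu l / lam k)) *
          (cnj (V $$ (l, i)) * V $$ (l, k))"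
        unfolding a_def by (simp add: mult_ac)
      also have "\<dots> = complex_of_real (1 / sqrt (lam i * lam k)) *
          (cnj ((q * V) $$ (l, i)) * complex_of_real (mu l) * (q * V) $$ (l, k))"
        unfolding sq using compression_eigenvector[OF l i(1)] compression_eigenvector[OF l k(1)]
          Tlam i k by (simp add: mult_ac)
      finally show "cnj (a i l) * a k l = complex_of_real (1 / sqrt (lam i * lam k)) *
          (cnj ((q * V) $$ (l, i)) * complex_of_real (mu l) * (q * V) $$ (l, k))" .
    qed
    also have "\<dots> = complex_of_real (1 / sqrt (lam i * lam k)) * T $$ (i, k)"
      unfolding compression_entry[OF i(1) k(1)] ..
    also have "\<dots> = (if i = k then 1 else 0)"
      using Tlam[OF i(1)] i k Td T unfolding diagonal_mat_def by auto
    finally show ?thesis .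
  qed
  hence "(\<Sum>i\<in>I. (cmod (a i j))\<^sup>2) \<le> 1" by (intro bessel_inequality[OF _ _ j]) (auto simp: I_def)
  moreover have "(cmod (a i j))\<^sup>2 = (cmod (V $$ (j, i)))\<^sup>2 * mu j / lam i" if "i \<in> I" for i
    using that mu0[OF j] unfolding a_def I_def lam_def by (simp add: norm_mult power_mult_distrib)
  ultimately show ?thesis unfolding I_def lam_def by simp
qed

lemma compression_trace:
  "(\<Sum>i<N. Re (T $$ (i, i))) = (\<Sum>j<N. mu j * Re (q $$ (j, j)))"
proof -
  have Vc: "V \<in> carrier_mat N N" using V unitary_carrier by blast
  have Qc: "q * V \<in> carrier_mat N N" using q Vc by simp
  have "q * V * cadj (q * V) = q"
    unfolding cadj_mult[OF q Vc] qh using q Vc unitary_cancel(1)[OF V q] qq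
    by (simp add: assoc_mult_mat[of _ N N _ N _ N] mult_carrier_mat[of _ N N])
  hence "q $$ (j, j) = complex_of_real (\<Sum>i<N. (cmod ((q * V) $$ (j, i)))\<^sup>2)" if "j < N" for j
    using index_mult_mat_sum[OF Qc cadj_carrier[OF Qc] that that] carrier_matD[OF Qc] that
    by (simp add: complex_norm_square del: of_real_power)
  hence "(\<Sum>j<N. mu j * Re (q $$ (j, j))) = (\<Sum>j<N. \<Sum>i<N. mu j * (cmod ((q * V) $$ (j, i)))\<^sup>2)"
    by (simp add: sum_distrib_left)
  also have "\<dots> = (\<Sum>i<N. Re (T $$ (i, i)))"
    by (subst sum.swap) (simp add: compression_eigenvalue)
  finally show ?thesis by simp
qed

end

theorem entropy_compression_diag:
  fixes mu :: "nat \<Rightarrow> real"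
  assumes mu0: "\<And>j. j < N \<Longrightarrow> mu j \<ge> 0" and mu1: "(\<Sum>j<N. mu j) = 1"
    and q: "q \<in> carrier_mat N N" and qq: "q * q = q" and qh: "cadj q = q"
  defines "p \<equiv> (\<Sum>j<N. mu j * Re (q $$ (j, j)))"
  shows "vN_entropy (q * real_diag_mat N mu * q) \<le> (\<Sum>j<N. eta (mu j)) + (1 - p)"
    and "(\<Sum>j<N. eta (mu j)) \<le> vN_entropy (q * real_diag_mat N mu * q) + real N * eta ((1 - p) / real N)"
    and "p \<le> 1"
proof -
  let ?A = "q * real_diag_mat N mu * q"
  have Ac: "?A \<in> carrier_mat N N" using q by (simp add: mult_carrier_mat[of _ N N])
  have "cadj ?A = ?A" using cadj_mult3[OF q _ q] qh by (simp add: cadj_real_diag_mat)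
  then obtain V T where V: "unitary N V" and T: "T \<in> carrier_mat N N" "diagonal_mat T"
    and decomp: "?A = V * T * cadj V"
    using hermitian_spectral[OF Ac] by blast
  note compression = mu0 q qq qh V T decomp
  define lam where "lam i = Re (T $$ (i, i))" for i
  define w where "w i j = (cmod (V $$ (j, i)))\<^sup>2" for i j
  have Tii: "T $$ (i, i) = complex_of_real (\<Sum>l<N. mu l * (cmod ((q * V) $$ (l, i)))\<^sup>2)"
    if "i < N" for i
    using compression_eigenvalue[OF compression that] .
  have lam0: "lam i \<ge> 0" if "i < N" for i
    unfolding lam_def Tii[OF that] using mu0 by (auto intro!: sum_nonneg)
  have lamw: "lam i = (\<Sum>j<N. w i j * mu j)" if "i < N" "lam i > 0" for i
  proof -
    have "T $$ (i, i) \<noteq> 0" using that(2) unfolding lam_def by auto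
    hence "(q * V) $$ (j, i) = V $$ (j, i)" if "j < N" for j
      using compression_eigenvector[OF compression that \<open>i < N\<close>] by blast
    hence "(\<Sum>l<N. mu l * (cmod ((q * V) $$ (l, i)))\<^sup>2) = (\<Sum>j<N. w i j * mu j)"
      unfolding w_def by (intro sum.cong refl) (simp add: mult.commute)
    thus ?thesis unfolding lam_def Tii[OF that(1)] by simp
  qed
  have p: "p = (\<Sum>i<N. lam i)" unfolding p_def lam_def using compression_trace[OF compression] by simp
  have vN: "vN_entropy ?A = (\<Sum>i<N. eta (lam i))"
    unfolding decomp lam_def using vN_entropy_unitary_conj[OF V T(1)] vN_entropy_diagonal[OF T] by simp
  have w: "(\<Sum>i<N. w i j) = 1" "(\<Sum>i<N. w j i) = 1" if "j < N" for j
    unfolding w_def using unitary_row_col_norms[OF V that] by simp_all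
  have bessel: "(\<Sum>i\<in>{i. i < N \<and> lam i > 0}. w i j * mu j / lam i) \<le> 1" if "j < N" for j
    unfolding w_def lam_def by (rule compression_bessel[OF compression that])
  note bounds = compressed_entropy_upper_bound[of N mu w lam] compressed_entropy_lower_bound[of N mu w lam]
  show "vN_entropy ?A \<le> (\<Sum>j<N. eta (mu j)) + (1 - p)"
    using bounds(1)[OF mu0 mu1 _ w(1) lam0 lamw bessel] vN p unfolding w_def by simp
  show "(\<Sum>j<N. eta (mu j)) \<le> vN_entropy ?A + real N * eta ((1 - p) / real N)" "p \<le> 1"
    using bounds(2,3)[OF mu0 mu1 _ w lam0 lamw] vN p unfolding w_def by auto
qed

section \<open>The algebra \<open>A\<^sup>n\<close> as a pattern of admissible matrix entries\<close>

lemma sum_list_take_mono: "m \<le> n \<Longrightarrow> sum_list (take m (xs :: nat list)) \<le> sum_list (take n xs)"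
  by (metis le_Suc_ex take_add sum_list_append le_add1)

lemma block_exists:
  "i < sum_list (ks :: nat list) \<Longrightarrow>
     \<exists>b<length ks. sum_list (take b ks) \<le> i \<and> i < sum_list (take (Suc b) ks)"
proof (induction ks arbitrary: i)
  case (Cons k ks)
  show ?case
  proof (cases "i < k")
    case False
    hence "i - k < sum_list ks" using Cons.prems by simp
    then obtain b where "b < length ks" "sum_list (take b ks) \<le> i - k"
      "i - k < sum_list (take (Suc b) ks)"
      using Cons.IH by blast
    thus ?thesis using False by (intro exI[of _ "Suc b"]) auto
  qed (intro exI[of _ 0], auto)
qed simp

lemma block_unique:
  assumes "sum_list (take b ks) \<le> (j::nat)" "j < sum_list (take (Suc b) ks)"
    and "sum_list (take b' ks) \<le> j" "j < sum_list (take (Suc b') ks)"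
  shows "b = b'"
  using sum_list_take_mono[of "Suc b" b' ks] sum_list_take_mono[of "Suc b'" b ks] assms
  by (cases b b' rule: linorder_cases) auto

lemma same_block_sym: "same_block ks i j \<longleftrightarrow> same_block ks j i"
  unfolding same_block_def by auto

lemma same_block_refl: "i < sum_list ks \<Longrightarrow> same_block ks i i"
  unfolding same_block_def using block_exists by blast

lemma same_block_trans: "same_block ks i j \<Longrightarrow> same_block ks j l \<Longrightarrow> same_block ks i l"
  unfolding same_block_def using block_unique by metis

text \<open>Indices of \<open>(d^n) \<times> (d^n)\<close> matrices, \<open>d = sum_list ks\<close>, are read as \<open>n\<close> base-\<open>d\<close> digits, the
  last site being the least significant digit, as in \<open>kron\<close>.\<close>

fun block_equiv :: "nat list \<Rightarrow> nat \<Rightarrow> nat \<Rightarrow> nat \<Rightarrow> bool" where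
  "block_equiv ks 0 i j = True"
| "block_equiv ks (Suc n) i j \<longleftrightarrow>
     block_equiv ks n (i div sum_list ks) (j div sum_list ks) \<and>
     same_block ks (i mod sum_list ks) (j mod sum_list ks)"

lemma block_equiv_sym: "block_equiv ks n i j \<longleftrightarrow> block_equiv ks n j i"
  by (induction n arbitrary: i j) (auto simp: same_block_sym)

lemma block_equiv_refl: "sum_list ks > 0 \<Longrightarrow> block_equiv ks n i i"
  by (induction n arbitrary: i) (auto intro: same_block_refl)

lemma block_equiv_trans: "block_equiv ks n i j \<Longrightarrow> block_equiv ks n j l \<Longrightarrow> block_equiv ks n i l"
  by (induction n arbitrary: i j l) (auto intro: same_block_trans)

definition block_mats :: "nat list \<Rightarrow> nat \<Rightarrow> complex mat set" where
  "block_mats ks n = {M \<in> carrier_mat (sum_list ks ^ n) (sum_list ks ^ n).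
     \<forall>i < sum_list ks ^ n. \<forall>j < sum_list ks ^ n. \<not> block_equiv ks n i j \<longrightarrow> M $$ (i, j) = 0}"

lemma block_mats_carrier: "M \<in> block_mats ks n \<Longrightarrow> M \<in> carrier_mat (sum_list ks ^ n) (sum_list ks ^ n)"
  unfolding block_mats_def by auto

lemma block_mats_zero: "0\<^sub>m (sum_list ks ^ n) (sum_list ks ^ n) \<in> block_mats ks n"
  unfolding block_mats_def by auto

lemma block_mats_add: "x \<in> block_mats ks n \<Longrightarrow> y \<in> block_mats ks n \<Longrightarrow> x + y \<in> block_mats ks n"
  unfolding block_mats_def by auto

lemma block_mats_smult: "x \<in> block_mats ks n \<Longrightarrow> c \<cdot>\<^sub>m x \<in> block_mats ks n"
  unfolding block_mats_def by auto

lemma lin_span_subset: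
  assumes "S \<subseteq> B" "0\<^sub>m n n \<in> B" "\<And>x y. x \<in> B \<Longrightarrow> y \<in> B \<Longrightarrow> x + y \<in> B"
    "\<And>x c. x \<in> B \<Longrightarrow> c \<cdot>\<^sub>m x \<in> B"
  shows "lin_span n S \<subseteq> B"
proof
  fix x assume "x \<in> lin_span n S"
  thus "x \<in> B" by (induction rule: lin_span.induct) (use assms in auto)
qed

lemma kron_carrier: "X \<in> carrier_mat n n \<Longrightarrow> a \<in> carrier_mat m m \<Longrightarrow> kron X a \<in> carrier_mat (n * m) (n * m)"
  unfolding kron_def by auto

lemma kron_index:
  "X \<in> carrier_mat n n \<Longrightarrow> a \<in> carrier_mat m m \<Longrightarrow> i < n * m \<Longrightarrow> j < n * m \<Longrightarrow>
     kron X a $$ (i, j) = X $$ (i div m, j div m) * a $$ (i mod m, j mod m)"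
  unfolding kron_def by auto

lemma digits_less:
  fixes i d :: nat
  assumes "i < d ^ Suc n"
  shows "i < d ^ n * d" "i div d < d ^ n" "i mod d < d"
proof -
  show i: "i < d ^ n * d" using assms unfolding power_Suc2 .
  thus "i div d < d ^ n" by (simp add: less_mult_imp_div_less)
  show "i mod d < d" using i by (cases "d = 0") auto
qed

lemma kron_block_mats:
  assumes X: "X \<in> block_mats ks n" and a: "a \<in> blk_alg ks"
  shows "kron X a \<in> block_mats ks (Suc n)"
proof -
  let ?d = "sum_list ks"
  have Xc: "X \<in> carrier_mat (?d ^ n) (?d ^ n)" using X by (rule block_mats_carrier)
  have ac: "a \<in> carrier_mat ?d ?d" using a unfolding blk_alg_def by auto
  have "kron X a $$ (i, j) = 0"
    if i: "i < ?d ^ Suc n" and j: "j < ?d ^ Suc n" and ij: "\<not> block_equiv ks (Suc n) i j" for i j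
  proof (cases "block_equiv ks n (i div ?d) (j div ?d)")
    case True
    hence "a $$ (i mod ?d, j mod ?d) = 0"
      using a ij digits_less[OF i] digits_less[OF j] unfolding blk_alg_def by auto
    thus ?thesis using kron_index[OF Xc ac] digits_less[OF i] digits_less[OF j] by simp
  next
    case False
    hence "X $$ (i div ?d, j div ?d) = 0"
      using X digits_less[OF i] digits_less[OF j] unfolding block_mats_def by auto
    thus ?thesis using kron_index[OF Xc ac] digits_less[OF i] digits_less[OF j] by simp
  qed
  thus ?thesis using kron_carrier[OF Xc ac] unfolding block_mats_def power_Suc2 by simp
qed

lemma Apow_subset_block_mats: "Apow ks n \<subseteq> block_mats ks n"
proof (induction n)
  case 0
  show ?case by simp (rule lin_span_subset, auto simp: block_mats_def)
next
  case (Suc n)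
  have "{kron X a | X a. X \<in> Apow ks n \<and> a \<in> blk_alg ks} \<subseteq> block_mats ks (Suc n)"
    using Suc kron_block_mats by blast
  thus ?case using block_mats_zero block_mats_add block_mats_smult
    by (simp only: Apow.simps) (rule lin_span_subset)
qed

definition mat_unit :: "nat \<Rightarrow> nat \<Rightarrow> nat \<Rightarrow> complex mat" where
  "mat_unit N i j = mat N N (\<lambda>(a, b). if a = i \<and> b = j then 1 else 0)"

lemma mat_unit_carrier [simp]: "mat_unit N i j \<in> carrier_mat N N"
  unfolding mat_unit_def by simp

lemma mat_unit_dims [simp]: "dim_row (mat_unit N i j) = N" "dim_col (mat_unit N i j) = N"
  unfolding mat_unit_def by auto

lemma mat_unit_index: "a < N \<Longrightarrow> b < N \<Longrightarrow> mat_unit N i j $$ (a, b) = (if a = i \<and> b = j then 1 else 0)"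
  unfolding mat_unit_def by simp

lemma Apow_lin_span: "\<exists>S. Apow ks n = lin_span (sum_list ks ^ n) S"
  by (cases n) auto

lemma Apow_zero: "0\<^sub>m (sum_list ks ^ n) (sum_list ks ^ n) \<in> Apow ks n"
  using Apow_lin_span[of ks n] lin_span.zero by metis

lemma Apow_add: "x \<in> Apow ks n \<Longrightarrow> y \<in> Apow ks n \<Longrightarrow> x + y \<in> Apow ks n"
  using Apow_lin_span[of ks n] lin_span.add by metis

lemma Apow_smult: "x \<in> Apow ks n \<Longrightarrow> c \<cdot>\<^sub>m x \<in> Apow ks n"
  using Apow_lin_span[of ks n] lin_span.smult by metis

lemma kron_mat_unit:
  assumes d: "d > 0" and i: "i < d ^ Suc n" and j: "j < d ^ Suc n"
  shows "kron (mat_unit (d ^ n) (i div d) (j div d)) (mat_unit d (i mod d) (j mod d)) =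
    mat_unit (d ^ Suc n) i j"
proof (rule eq_matI)
  have dd: "d ^ n * d = d ^ Suc n" by (simp add: mult.commute)
  show "dim_row (kron (mat_unit (d ^ n) (i div d) (j div d)) (mat_unit d (i mod d) (j mod d))) =
      dim_row (mat_unit (d ^ Suc n) i j)"
    "dim_col (kron (mat_unit (d ^ n) (i div d) (j div d)) (mat_unit d (i mod d) (j mod d))) =
      dim_col (mat_unit (d ^ Suc n) i j)"
    unfolding kron_def using dd by auto
  fix a b assume "a < dim_row (mat_unit (d ^ Suc n) i j)" "b < dim_col (mat_unit (d ^ Suc n) i j)"
  hence a: "a < d ^ Suc n" and b: "b < d ^ Suc n" by simp_all
  have eq_iff: "x = y \<longleftrightarrow> x div d = y div d \<and> x mod d = y mod d" for x y :: nat
    by (metis div_mult_mod_eq)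
  have "kron (mat_unit (d ^ n) (i div d) (j div d)) (mat_unit d (i mod d) (j mod d)) $$ (a, b)
      = mat_unit (d ^ n) (i div d) (j div d) $$ (a div d, b div d) *
        mat_unit d (i mod d) (j mod d) $$ (a mod d, b mod d)"
    by (rule kron_index[OF mat_unit_carrier mat_unit_carrier digits_less(1)[OF a] digits_less(1)[OF b]])
  also have "\<dots> = (if a = i \<and> b = j then 1 else 0)"
    using digits_less(2,3)[OF a] digits_less(2,3)[OF b] eq_iff[of a i] eq_iff[of b j]
    by (auto simp: mat_unit_index)
  also have "\<dots> = mat_unit (d ^ Suc n) i j $$ (a, b)" using a b by (simp add: mat_unit_index)
  finally show "kron (mat_unit (d ^ n) (i div d) (j div d)) (mat_unit d (i mod d) (j mod d)) $$ (a, b) =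
      mat_unit (d ^ Suc n) i j $$ (a, b)" .
qed

lemma mat_unit_Apow:
  assumes d: "sum_list ks > 0"
  shows "i < sum_list ks ^ n \<Longrightarrow> j < sum_list ks ^ n \<Longrightarrow> block_equiv ks n i j \<Longrightarrow>
    mat_unit (sum_list ks ^ n) i j \<in> Apow ks n"
proof (induction n arbitrary: i j)
  case 0
  have "mat_unit 1 0 0 = 1\<^sub>m 1" unfolding mat_unit_def by (rule eq_matI) auto
  thus ?case using 0 by (simp add: lin_span.gen)
next
  case (Suc n)
  let ?d = "sum_list ks"
  have "mat_unit (?d ^ n) (i div ?d) (j div ?d) \<in> Apow ks n"
    using Suc digits_less[OF Suc.prems(1)] digits_less[OF Suc.prems(2)] by simp
  moreover have "mat_unit ?d (i mod ?d) (j mod ?d) \<in> blk_alg ks"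
    unfolding blk_alg_def using Suc.prems by (auto simp: mat_unit_index)
  ultimately have "kron (mat_unit (?d ^ n) (i div ?d) (j div ?d)) (mat_unit ?d (i mod ?d) (j mod ?d))
      \<in> Apow ks (Suc n)"
    unfolding Apow.simps by (intro lin_span.gen) blast
  thus ?case using kron_mat_unit[OF d Suc.prems(1,2)] by simp
qed

lemma block_mats_induct [consumes 1, case_names zero add_unit]:
  assumes M: "M \<in> block_mats ks n"
    and zero: "P (0\<^sub>m (sum_list ks ^ n) (sum_list ks ^ n))"
    and add_unit: "\<And>X i j c. X \<in> block_mats ks n \<Longrightarrow> P X \<Longrightarrow> i < sum_list ks ^ n \<Longrightarrow>
      j < sum_list ks ^ n \<Longrightarrow> block_equiv ks n i j \<Longrightarrow> P (X + c \<cdot>\<^sub>m mat_unit (sum_list ks ^ n) i j)"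
  shows "P M"
proof -
  let ?N = "sum_list ks ^ n"
  have "\<forall>M \<in> block_mats ks n. (\<forall>i<?N. \<forall>j<?N. (i, j) \<notin> S \<longrightarrow> M $$ (i, j) = 0) \<longrightarrow> P M"
    if "finite S" for S :: "(nat \<times> nat) set"
    using that
  proof (induction S rule: finite_induct)
    case empty
    have "M = 0\<^sub>m ?N ?N" if "M \<in> block_mats ks n" "\<forall>i<?N. \<forall>j<?N. M $$ (i, j) = 0" for M
      using that unfolding block_mats_def by (intro eq_matI) auto
    thus ?case using zero by auto
  next
    case (insert x S)
    obtain i0 j0 where x: "x = (i0, j0)" by (cases x)
    show ?case
    proof safe
      fix M assume M: "M \<in> block_mats ks n"
        and z: "\<forall>i<?N. \<forall>j<?N. (i, j) \<notin> insert x S \<longrightarrow> M $$ (i, j) = 0"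
      have Mc: "M \<in> carrier_mat ?N ?N" using M by (rule block_mats_carrier)
      define M' where "M' = mat ?N ?N (\<lambda>(i, j). if (i, j) = (i0, j0) then 0 else M $$ (i, j))"
      have M': "M' \<in> block_mats ks n" using M unfolding block_mats_def M'_def by auto
      have "P M'" using insert.IH M' z x unfolding M'_def by auto
      show "P M"
      proof (cases "i0 < ?N \<and> j0 < ?N \<and> block_equiv ks n i0 j0")
        case True
        have "M = M' + M $$ (i0, j0) \<cdot>\<^sub>m mat_unit ?N i0 j0"
          using Mc unfolding M'_def by (intro eq_matI) (auto simp: mat_unit_index)
        thus ?thesis using add_unit[OF M' \<open>P M'\<close>] True by metis
      next
        case False
        have "M = M'" using Mc M False unfolding M'_def block_mats_def by (intro eq_matI) auto
        thus ?thesis using \<open>P M'\<close> by simp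
      qed
    qed
  qed
  from this[of "{..<?N} \<times> {..<?N}"] M show ?thesis by auto
qed

theorem Apow_eq_block_mats:
  assumes d: "sum_list ks > 0"
  shows "Apow ks n = block_mats ks n"
proof
  show "block_mats ks n \<subseteq> Apow ks n"
  proof
    fix M assume "M \<in> block_mats ks n"
    thus "M \<in> Apow ks n"
      by (induction rule: block_mats_induct) (auto intro!: Apow_add Apow_smult mat_unit_Apow[OF d] Apow_zero)
  qed
qed (rule Apow_subset_block_mats)

section \<open>The density matrix of a state\<close>

lemma mtrace_mult_sum:
  assumes D: "D \<in> carrier_mat N N" and M: "M \<in> carrier_mat N N"
  shows "mtrace (D * M) = (\<Sum>i<N. \<Sum>j<N. D $$ (i, j) * M $$ (j, i))"
proof -
  have "mtrace (D * M) = (\<Sum>i<N. (D * M) $$ (i, i))" unfolding mtrace_def using D by simp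
  also have "\<dots> = (\<Sum>i<N. \<Sum>j<N. D $$ (i, j) * M $$ (j, i))"
    by (intro sum.cong refl) (rule index_mult_mat_sum[OF D M], auto)
  finally show ?thesis .
qed

lemma mtrace_mult_comm:
  assumes A: "A \<in> carrier_mat n m" and B: "B \<in> carrier_mat m n"
  shows "mtrace (A * B) = mtrace (B * A)"
proof -
  have "mtrace (A * B) = (\<Sum>i<n. (A * B) $$ (i, i))" unfolding mtrace_def using A by simp
  also have "\<dots> = (\<Sum>i<n. \<Sum>k<m. A $$ (i, k) * B $$ (k, i))"
    by (intro sum.cong refl) (rule index_mult_mat_sum[OF A B], auto)
  also have "\<dots> = (\<Sum>k<m. \<Sum>i<n. B $$ (k, i) * A $$ (i, k))"
    by (subst sum.swap) (simp add: mult.commute)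
  also have "\<dots> = (\<Sum>k<m. (B * A) $$ (k, k))"
    by (intro sum.cong refl) (rule index_mult_mat_sum[OF B A, symmetric], auto)
  also have "\<dots> = mtrace (B * A)" unfolding mtrace_def using B by simp
  finally show ?thesis .
qed

lemma mtrace_mult_add_smult:
  assumes D: "D \<in> carrier_mat N N" and X: "X \<in> carrier_mat N N" and Y: "Y \<in> carrier_mat N N"
  shows "mtrace (D * (X + c \<cdot>\<^sub>m Y)) = mtrace (D * X) + c * mtrace (D * Y)"
  using X Y by (simp add: mtrace_mult_sum[OF D] sum.distrib sum_distrib_left algebra_simps)

lemma mtrace_mult_mat_unit:
  assumes D: "D \<in> carrier_mat N N" and i: "i < N" and j: "j < N"
  shows "mtrace (D * mat_unit N i j) = D $$ (j, i)"
proof -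
  have "mtrace (D * mat_unit N i j) =
      (\<Sum>a<N. \<Sum>b<N. if b = i then (if a = j then D $$ (a, b) else 0) else 0)"
    unfolding mtrace_mult_sum[OF D mat_unit_carrier] by (intro sum.cong refl) (auto simp: mat_unit_index)
  thus ?thesis using i j by simp
qed

definition quad_form :: "complex mat \<Rightarrow> (nat \<Rightarrow> complex) \<Rightarrow> complex" where
  "quad_form D x = (\<Sum>i<dim_row D. \<Sum>j<dim_row D. cnj (x i) * D $$ (i, j) * x j)"

lemma quad_form_two_point:
  assumes D: "D \<in> carrier_mat N N" and i: "i < N" and j: "j < N"
  shows "quad_form D (\<lambda>a. (if a = i then u else 0) + (if a = j then v else 0)) =
    cnj u * D $$ (i, i) * u + cnj u * D $$ (i, j) * v + cnj v * D $$ (j, i) * u + cnj v * D $$ (j, j) * v"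
proof -
  have delta: "(\<Sum>a<N. \<Sum>b<N. (if a = k then x else 0) * D $$ (a, b) * (if b = l then y else 0))
      = x * D $$ (k, l) * y" if "k < N" "l < N" for k l x y
    using that by (simp add: if_distrib[of "\<lambda>z. z * _"] if_distrib[of "\<lambda>z. _ * z"] sum.delta
        cong: if_cong)
  have "quad_form D (\<lambda>a. (if a = i then u else 0) + (if a = j then v else 0)) = (\<Sum>a<N. \<Sum>b<N.
      (if a = i then cnj u else 0) * D $$ (a, b) * (if b = i then u else 0) +
      (if a = i then cnj u else 0) * D $$ (a, b) * (if b = j then v else 0) +
      (if a = j then cnj v else 0) * D $$ (a, b) * (if b = i then u else 0) +
      (if a = j then cnj v else 0) * D $$ (a, b) * (if b = j then v else 0))"
    unfolding quad_form_def using D by (intro sum.cong refl) (auto simp: algebra_simps)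
  thus ?thesis by (simp only: sum.distrib delta i j)
qed

lemma hermitian_if_quad_form_real:
  assumes D: "D \<in> carrier_mat N N" and im: "\<And>x. Im (quad_form D x) = 0"
  shows "cadj D = D"
proof (rule eq_matI)
  have diag: "Im (D $$ (i, i)) = 0" if i: "i < N" for i
    using im[of "\<lambda>a. (if a = i then 1 else 0) + (if a = i then 0 else 0)"]
      quad_form_two_point[OF D i i, of 1 0] by simp
  fix i j assume "i < dim_row D" "j < dim_col D"
  hence i: "i < N" and j: "j < N" using D by auto
  have "Im (D $$ (i, j) + D $$ (j, i)) = 0"
    using im[of "\<lambda>a. (if a = i then 1 else 0) + (if a = j then 1 else 0)"]
      quad_form_two_point[OF D i j, of 1 1] diag[OF i] diag[OF j] by simp
  moreover have "Re (D $$ (i, j)) - Re (D $$ (j, i)) = 0"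
    using im[of "\<lambda>a. (if a = i then 1 else 0) + (if a = j then \<i> else 0)"]
      quad_form_two_point[OF D i j, of 1 "\<i>"] diag[OF i] diag[OF j] by simp
  ultimately have "D $$ (j, i) = cnj (D $$ (i, j))" by (simp add: complex_eq_iff)
  thus "cadj D $$ (i, j) = D $$ (i, j)" using i j D by simp
qed (use D in auto)

text \<open>Entry \<open>(i, j)\<close> is read off from \<open>mtrace (D * mat_unit N j i) = D $$ (i, j)\<close>.\<close>

definition density_mat :: "nat list \<Rightarrow> (nat \<Rightarrow> complex mat \<Rightarrow> complex) \<Rightarrow> nat \<Rightarrow> complex mat" where
  "density_mat ks phi n = mat (sum_list ks ^ n) (sum_list ks ^ n)
     (\<lambda>(i, j). if block_equiv ks n i j then phi n (mat_unit (sum_list ks ^ n) j i) else 0)"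

definition block_rep :: "nat list \<Rightarrow> nat \<Rightarrow> nat \<Rightarrow> nat" where
  "block_rep ks n i = (LEAST r. block_equiv ks n i r)"

text \<open>Summing the state over \<open>cadj Y * Y\<close> for these matrices, one per \<open>block_equiv\<close>-class, gives
  the quadratic form of the density matrix at an arbitrary vector \<open>x\<close>; this is how positivity
  passes from the state to its density matrix.\<close>

definition class_row_mat :: "nat list \<Rightarrow> nat \<Rightarrow> (nat \<Rightarrow> complex) \<Rightarrow> nat \<Rightarrow> complex mat" where
  "class_row_mat ks n x r = mat (sum_list ks ^ n) (sum_list ks ^ n)
     (\<lambda>(a, b). if a = r \<and> block_rep ks n b = r then cnj (x b) else 0)"

lemma block_rep_equiv: "sum_list ks > 0 \<Longrightarrow> block_equiv ks n i (block_rep ks n i)"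
  unfolding block_rep_def by (rule LeastI[of _ i]) (rule block_equiv_refl)

lemma block_rep_le: "sum_list ks > 0 \<Longrightarrow> block_rep ks n i \<le> i"
  unfolding block_rep_def by (rule Least_le) (rule block_equiv_refl)

lemma block_rep_eq_iff:
  assumes "sum_list ks > 0"
  shows "block_rep ks n i = block_rep ks n j \<longleftrightarrow> block_equiv ks n i j"
proof
  assume "block_rep ks n i = block_rep ks n j"
  thus "block_equiv ks n i j"
    using block_rep_equiv[OF assms, of n i] block_rep_equiv[OF assms, of n j]
      block_equiv_sym block_equiv_trans by metis
next
  assume "block_equiv ks n i j"
  hence "block_equiv ks n i = block_equiv ks n j" using block_equiv_sym block_equiv_trans by blast
  thus "block_rep ks n i = block_rep ks n j" unfolding block_rep_def by simp
qed

lemma class_row_mat_gram_index: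
  assumes r: "r < sum_list ks ^ n" and i: "i < sum_list ks ^ n" and j: "j < sum_list ks ^ n"
  shows "(cadj (class_row_mat ks n x r) * class_row_mat ks n x r) $$ (j, i) =
    (if block_rep ks n j = r then x j else 0) * (if block_rep ks n i = r then cnj (x i) else 0)"
proof -
  let ?N = "sum_list ks ^ n" and ?Y = "class_row_mat ks n x r"
  have Yc: "?Y \<in> carrier_mat ?N ?N" unfolding class_row_mat_def by simp
  have "(cadj ?Y * ?Y) $$ (j, i) = (\<Sum>a<?N. if a = r then
      (if block_rep ks n j = r then x j else 0) * (if block_rep ks n i = r then cnj (x i) else 0) else 0)"
    unfolding index_mult_mat_sum[OF cadj_carrier[OF Yc] Yc j i]
    using i j by (intro sum.cong refl) (auto simp: class_row_mat_def)
  thus ?thesis using r by simp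
qed

context
  fixes ks :: "nat list" and phi :: "nat \<Rightarrow> complex mat \<Rightarrow> complex"
  assumes st: "stationary_state ks phi" and d: "sum_list ks > 0"
begin

lemma state_add: "X \<in> Apow ks n \<Longrightarrow> Y \<in> Apow ks n \<Longrightarrow> phi n (X + Y) = phi n X + phi n Y"
  using st unfolding stationary_state_def by blast

lemma state_smult: "X \<in> Apow ks n \<Longrightarrow> phi n (c \<cdot>\<^sub>m X) = c * phi n X"
  using st unfolding stationary_state_def by blast

lemma state_positive: "X \<in> Apow ks n \<Longrightarrow> Im (phi n (cadj X * X)) = 0 \<and> Re (phi n (cadj X * X)) \<ge> 0"
  using st unfolding stationary_state_def by blast

lemma state_one: "phi n (1\<^sub>m (sum_list ks ^ n)) = 1"
  using st unfolding stationary_state_def by blast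

lemma density_mat_block_mats: "density_mat ks phi n \<in> block_mats ks n"
  unfolding density_mat_def block_mats_def by auto

lemma density_mat_carrier: "density_mat ks phi n \<in> carrier_mat (sum_list ks ^ n) (sum_list ks ^ n)"
  unfolding density_mat_def by simp

lemma state_eq_mtrace_density_mat:
  assumes "a \<in> Apow ks n"
  shows "phi n a = mtrace (density_mat ks phi n * a)"
proof -
  let ?N = "sum_list ks ^ n" and ?D = "density_mat ks phi n"
  have "a \<in> block_mats ks n" using assms Apow_eq_block_mats[OF d] by simp
  thus ?thesis
  proof (induction rule: block_mats_induct)
    case zero
    have "phi n (0 \<cdot>\<^sub>m 0\<^sub>m ?N ?N) = 0 * phi n (0\<^sub>m ?N ?N)" by (rule state_smult[OF Apow_zero])
    hence "phi n (0\<^sub>m ?N ?N) = 0" by simp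
    thus ?case using mtrace_mult_sum[OF density_mat_carrier zero_carrier_mat] by simp
  next
    case (add_unit X i j c)
    have X: "X \<in> Apow ks n" using add_unit.hyps(1) Apow_eq_block_mats[OF d] by simp
    have E: "mat_unit ?N i j \<in> Apow ks n" by (rule mat_unit_Apow[OF d add_unit.hyps(2-4)])
    have "phi n (X + c \<cdot>\<^sub>m mat_unit ?N i j) = phi n X + c * phi n (mat_unit ?N i j)"
      using state_add[OF X Apow_smult[OF E]] state_smult[OF E] by simp
    also have "phi n (mat_unit ?N i j) = ?D $$ (j, i)"
      using add_unit.hyps(2-4) block_equiv_sym unfolding density_mat_def by auto
    also have "\<dots> = mtrace (?D * mat_unit ?N i j)"
      by (rule mtrace_mult_mat_unit[OF density_mat_carrier add_unit.hyps(2,3), symmetric])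
    finally show ?case
      using add_unit.IH block_mats_carrier[OF add_unit.hyps(1)]
      by (simp add: mtrace_mult_add_smult[OF density_mat_carrier])
  qed
qed

lemma density_eq_density_mat: "density ks phi n = density_mat ks phi n"
  unfolding density_def
proof (rule the_equality)
  show "density_mat ks phi n \<in> Apow ks n \<and>
      (\<forall>a\<in>Apow ks n. phi n a = mtrace (density_mat ks phi n * a))"
    using density_mat_block_mats Apow_eq_block_mats[OF d] state_eq_mtrace_density_mat by auto
next
  let ?N = "sum_list ks ^ n"
  fix D assume D: "D \<in> Apow ks n \<and> (\<forall>a\<in>Apow ks n. phi n a = mtrace (D * a))"
  have DB: "D \<in> block_mats ks n" using D Apow_eq_block_mats[OF d] by auto
  have Dc: "D \<in> carrier_mat ?N ?N" using DB by (rule block_mats_carrier)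
  show "D = density_mat ks phi n"
  proof (rule eq_matI)
    fix i j assume "i < dim_row (density_mat ks phi n)" "j < dim_col (density_mat ks phi n)"
    hence i: "i < ?N" and j: "j < ?N" unfolding density_mat_def by auto
    show "D $$ (i, j) = density_mat ks phi n $$ (i, j)"
    proof (cases "block_equiv ks n i j")
      case True
      hence "mat_unit ?N j i \<in> Apow ks n" using mat_unit_Apow[OF d j i] block_equiv_sym by auto
      thus ?thesis using D mtrace_mult_mat_unit[OF Dc j i] True i j unfolding density_mat_def by simp
    next
      case False
      thus ?thesis using DB i j unfolding block_mats_def density_mat_def by auto
    qed
  qed (use Dc in \<open>auto simp: density_mat_def\<close>)
qed

lemma mtrace_density_mat: "mtrace (density_mat ks phi n) = 1"
proof -
  let ?N = "sum_list ks ^ n"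
  have "1\<^sub>m ?N \<in> Apow ks n"
    unfolding Apow_eq_block_mats[OF d] block_mats_def using block_equiv_refl[OF d] by auto
  hence "phi n (1\<^sub>m ?N) = mtrace (density_mat ks phi n * 1\<^sub>m ?N)" by (rule state_eq_mtrace_density_mat)
  thus ?thesis using state_one right_mult_one_mat[OF density_mat_carrier] by simp
qed

lemma class_row_mat_Apow: "class_row_mat ks n x r \<in> Apow ks n"
  unfolding Apow_eq_block_mats[OF d] block_mats_def class_row_mat_def
  using block_rep_equiv[OF d] block_equiv_sym by auto

lemma quad_form_density_mat:
  "quad_form (density_mat ks phi n) x =
     (\<Sum>r<sum_list ks ^ n. phi n (cadj (class_row_mat ks n x r) * class_row_mat ks n x r))"
proof -
  let ?N = "sum_list ks ^ n" and ?D = "density_mat ks phi n"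
  let ?Y = "class_row_mat ks n x"
  let ?c = "\<lambda>r i j. (if block_rep ks n j = r then x j else 0) * (if block_rep ks n i = r then cnj (x i) else 0)"
  have Yc: "?Y r \<in> carrier_mat ?N ?N" for r unfolding class_row_mat_def by simp
  have "phi n (cadj (?Y r) * ?Y r) = (\<Sum>i<?N. \<Sum>j<?N. ?D $$ (i, j) * ?c r i j)" if r: "r < ?N" for r
  proof -
    have "cadj (?Y r) * ?Y r \<in> Apow ks n"
      unfolding Apow_eq_block_mats[OF d] block_mats_def
      using class_row_mat_gram_index[OF r] mult_carrier_mat[OF cadj_carrier[OF Yc] Yc]
        block_rep_eq_iff[OF d] block_equiv_sym by auto
    thus ?thesis
      using class_row_mat_gram_index[OF r] mult_carrier_mat[OF cadj_carrier[OF Yc] Yc]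
      by (simp add: state_eq_mtrace_density_mat mtrace_mult_sum[OF density_mat_carrier])
  qed
  hence "(\<Sum>r<?N. phi n (cadj (?Y r) * ?Y r)) = (\<Sum>r<?N. \<Sum>i<?N. \<Sum>j<?N. ?D $$ (i, j) * ?c r i j)"
    by simp
  also have "\<dots> = (\<Sum>i<?N. \<Sum>j<?N. \<Sum>r<?N. ?D $$ (i, j) * ?c r i j)"
    by (subst sum.swap, rule sum.cong[OF refl], rule sum.swap)
  also have "\<dots> = (\<Sum>i<?N. \<Sum>j<?N. cnj (x i) * ?D $$ (i, j) * x j)"
  proof (intro sum.cong refl)
    fix i j assume i: "i \<in> {..<?N}" and j: "j \<in> {..<?N}"
    have ri: "block_rep ks n i < ?N" using block_rep_le[OF d, of n i] i by simp
    show "(\<Sum>r<?N. ?D $$ (i, j) * ?c r i j) = cnj (x i) * ?D $$ (i, j) * x j"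
    proof (cases "block_rep ks n i = block_rep ks n j")
      case True
      hence "(\<Sum>r<?N. ?D $$ (i, j) * ?c r i j) =
          (\<Sum>r<?N. if r = block_rep ks n i then ?D $$ (i, j) * (x j * cnj (x i)) else 0)"
        by (intro sum.cong refl) auto
      thus ?thesis using ri by simp
    next
      case False
      hence "?D $$ (i, j) = 0" using i j block_rep_eq_iff[OF d] unfolding density_mat_def by simp
      thus ?thesis by simp
    qed
  qed
  finally show ?thesis unfolding quad_form_def density_mat_def by simp
qed

lemma density_mat_quad_form_nonneg:
  "Im (quad_form (density_mat ks phi n) x) = 0 \<and> Re (quad_form (density_mat ks phi n) x) \<ge> 0"
  unfolding quad_form_density_mat Re_sum Im_sum
  using state_positive[OF class_row_mat_Apow] by (auto intro: sum_nonneg)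

lemma hermitian_density_mat: "cadj (density_mat ks phi n) = density_mat ks phi n"
  using hermitian_if_quad_form_real[OF density_mat_carrier] density_mat_quad_form_nonneg by blast

end

lemma mtrace_unitary_conj:
  assumes U: "unitary N U" and L: "L \<in> carrier_mat N N" and X: "X \<in> carrier_mat N N"
  shows "mtrace (U * L * cadj U * X) = mtrace (L * (cadj U * X * U))"
proof -
  have Uc: "U \<in> carrier_mat N N" using U unitary_carrier by blast
  have "mtrace (U * L * cadj U * X) = mtrace (U * (L * cadj U * X))"
    using Uc L X by (simp add: assoc_mult_mat[of _ N N _ N _ N] mult_carrier_mat[of _ N N])
  also have "\<dots> = mtrace (L * cadj U * X * U)"
    using Uc L X by (intro mtrace_mult_comm) (auto simp: mult_carrier_mat[of _ N N])
  also have "\<dots> = mtrace (L * (cadj U * X * U))"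
    using Uc L X by (simp add: assoc_mult_mat[of _ N N _ N _ N] mult_carrier_mat[of _ N N])
  finally show ?thesis .
qed

lemma unitary_conj_diag_quad_form:
  assumes U: "U \<in> carrier_mat N N" and D: "D \<in> carrier_mat N N" and j: "j < N"
  shows "(cadj U * D * U) $$ (j, j) = quad_form D (\<lambda>i. U $$ (i, j))"
proof -
  have "(cadj U * D * U) $$ (j, j) = (\<Sum>b<N. (cadj U * D) $$ (j, b) * U $$ (b, j))"
    using U D j by (intro index_mult_mat_sum) auto
  also have "\<dots> = (\<Sum>b<N. (\<Sum>a<N. cnj (U $$ (a, j)) * D $$ (a, b)) * U $$ (b, j))"
    using j U by (intro sum.cong refl) (simp add: index_mult_mat_sum[OF cadj_carrier[OF U] D])
  also have "\<dots> = quad_form D (\<lambda>i. U $$ (i, j))"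
    unfolding quad_form_def using D by (simp add: sum_distrib_right) (rule sum.swap)
  finally show ?thesis .
qed

lemma unitary_conj_orth_proj:
  assumes U: "unitary N U" and q: "q \<in> carrier_mat N N" and qp: "orth_proj q"
  shows "orth_proj (cadj U * q * U)"
proof -
  have Uc: "U \<in> carrier_mat N N" using U unitary_carrier by blast
  have "cadj U * q * U * (cadj U * q * U) = cadj U * (q * (U * (cadj U * (q * U))))"
    using Uc q by (simp add: assoc_mult_mat[of _ N N _ N _ N] mult_carrier_mat[of _ N N])
  also have "\<dots> = cadj U * (q * (q * U))"
    using unitary_cancel(1)[OF U mult_carrier_mat[OF q Uc]] by simp
  also have "q * (q * U) = q * U"
    using assoc_mult_mat[OF q q Uc, symmetric] qp by (simp add: orth_proj_def)
  also have "cadj U * (q * U) = cadj U * q * U"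
    using assoc_mult_mat[OF cadj_carrier[OF Uc] q Uc] by simp
  finally show ?thesis
    using cadj_mult3[OF cadj_carrier[OF Uc] q Uc] qp unfolding orth_proj_def by simp
qed

lemma compress_unitary_conj:
  assumes U: "unitary N U" and q: "q \<in> carrier_mat N N" and L: "L \<in> carrier_mat N N"
  shows "q * (U * L * cadj U) * q = U * ((cadj U * q * U) * L * (cadj U * q * U)) * cadj U"
  using U q L unitary_cancel(1)[OF U, of "q * (U * (L * (cadj U * q)))" N]
    unitary_cancel_right(1)[OF U, of q N]
  by (simp add: unitary_def assoc_mult_mat[of _ N N _ N _ N] mult_carrier_mat[of _ N N])

lemma diagonal_eq_real_diag_mat:
  assumes T: "T \<in> carrier_mat N N" and Td: "diagonal_mat T"
    and mu: "\<And>j. j < N \<Longrightarrow> T $$ (j, j) = complex_of_real (mu j)"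
  shows "T = real_diag_mat N mu"
  using T Td mu unfolding diagonal_mat_def real_diag_mat_def by (intro eq_matI) auto

lemma mtrace_real_diag_mat_mult:
  assumes X: "X \<in> carrier_mat N N"
  shows "mtrace (real_diag_mat N mu * X) = (\<Sum>j<N. complex_of_real (mu j) * X $$ (j, j))"
proof -
  have "mtrace (real_diag_mat N mu * X) =
      (\<Sum>i<N. \<Sum>j<N. if j = i then complex_of_real (mu i) * X $$ (i, i) else 0)"
    unfolding mtrace_mult_sum[OF real_diag_mat_carrier X]
    by (intro sum.cong refl) (auto simp: real_diag_mat_def)
  thus ?thesis by simp
qed

lemma vN_entropy_real_diag_mat: "vN_entropy (real_diag_mat N mu) = (\<Sum>j<N. eta (mu j))"
  using vN_entropy_diagonal[OF real_diag_mat_carrier diagonal_real_diag_mat]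
  by (simp add: real_diag_mat_def)

context
  fixes ks :: "nat list" and phi :: "nat \<Rightarrow> complex mat \<Rightarrow> complex"
  assumes st: "stationary_state ks phi" and d: "sum_list ks > 0"
begin

lemma density_spectral:
  obtains U mu where "unitary (sum_list ks ^ n) U" "\<And>j. j < sum_list ks ^ n \<Longrightarrow> mu j \<ge> 0"
    "(\<Sum>j<sum_list ks ^ n. mu j) = 1"
    "density ks phi n = U * real_diag_mat (sum_list ks ^ n) mu * cadj U"
proof -
  let ?N = "sum_list ks ^ n" and ?D = "density_mat ks phi n"
  have D: "?D \<in> carrier_mat ?N ?N" by (rule density_mat_carrier[OF st d])
  obtain U T where U: "unitary ?N U" and T: "T \<in> carrier_mat ?N ?N" "diagonal_mat T"
    and DUT: "?D = U * T * cadj U"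
    using hermitian_spectral[OF D hermitian_density_mat[OF st d]] by blast
  have Uc: "U \<in> carrier_mat ?N ?N" using U unitary_carrier by blast
  define mu where "mu j = Re (T $$ (j, j))" for j
  have "T $$ (j, j) = quad_form ?D (\<lambda>i. U $$ (i, j))" if "j < ?N" for j
    using unitary_conj_diag_quad_form[OF Uc D that] unitary_conj_cancel[OF U T(1)] DUT by simp
  hence Tmu: "T $$ (j, j) = complex_of_real (mu j)" and mu0: "mu j \<ge> 0" if "j < ?N" for j
    using density_mat_quad_form_nonneg[OF st d] that unfolding mu_def by (auto simp: complex_eq_iff)
  have TL: "T = real_diag_mat ?N mu" by (rule diagonal_eq_real_diag_mat[OF T Tmu])
  have "cadj U * 1\<^sub>m ?N * U = 1\<^sub>m ?N" using U Uc by (simp add: unitary_def)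
  hence "complex_of_real (\<Sum>j<?N. mu j) = mtrace (real_diag_mat ?N mu * (cadj U * 1\<^sub>m ?N * U))"
    by (simp add: mtrace_def real_diag_mat_def)
  also have "\<dots> = mtrace (?D * 1\<^sub>m ?N)"
    unfolding DUT TL by (rule mtrace_unitary_conj[OF U real_diag_mat_carrier one_carrier_mat, symmetric])
  also have "\<dots> = 1" using D mtrace_density_mat[OF st d] by simp
  finally have "(\<Sum>j<?N. mu j) = 1" by (simp only: of_real_eq_1_iff)
  thus ?thesis using that U mu0 DUT TL density_eq_density_mat[OF st d] by auto
qed

theorem entropy_compression_bounds:
  assumes qA: "q \<in> Apow ks n" and qp: "orth_proj q"
  defines "p \<equiv> Re (phi n q)"
  shows "vN_entropy (q * density ks phi n * q) \<le> vN_entropy (density ks phi n) + (1 - p)"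
    and "vN_entropy (density ks phi n) \<le>
      vN_entropy (q * density ks phi n * q) + (1 - p) * (real n * ln (sum_list ks)) + eta (1 - p)"
    and "0 \<le> p" and "p \<le> 1"
proof -
  let ?N = "sum_list ks ^ n"
  obtain U mu where U: "unitary ?N U" and mu0: "\<And>j. j < ?N \<Longrightarrow> mu j \<ge> 0"
    and mu1: "(\<Sum>j<?N. mu j) = 1" and D: "density ks phi n = U * real_diag_mat ?N mu * cadj U"
    using density_spectral[where n = n] by blast
  have Uc: "U \<in> carrier_mat ?N ?N" using U unitary_carrier by blast
  have q: "q \<in> carrier_mat ?N ?N" using qA Apow_eq_block_mats[OF d] block_mats_carrier by blast
  define q' where "q' = cadj U * q * U"
  have q': "q' \<in> carrier_mat ?N ?N" "orth_proj q'"
    unfolding q'_def using Uc q unitary_conj_orth_proj[OF U q qp] by auto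
  have "phi n q = mtrace (density ks phi n * q)"
    using qA by (simp add: state_eq_mtrace_density_mat[OF st d] density_eq_density_mat[OF st d])
  also have "\<dots> = mtrace (real_diag_mat ?N mu * q')"
    unfolding D q'_def by (rule mtrace_unitary_conj[OF U real_diag_mat_carrier q])
  finally have p: "p = (\<Sum>j<?N. mu j * Re (q' $$ (j, j)))"
    unfolding p_def using q' by (simp add: mtrace_real_diag_mat_mult Re_sum)
  have vN: "vN_entropy (q * density ks phi n * q) = vN_entropy (q' * real_diag_mat ?N mu * q')"
    "vN_entropy (density ks phi n) = (\<Sum>j<?N. eta (mu j))"
    unfolding D q'_def compress_unitary_conj[OF U q real_diag_mat_carrier]
    using q' Uc unfolding q'_def
    by (simp_all add: vN_entropy_unitary_conj[OF U] vN_entropy_real_diag_mat mult_carrier_mat[of _ ?N ?N])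
  note bounds = entropy_compression_diag[OF mu0 mu1 q'(1), folded p] q'(2)[unfolded orth_proj_def]
  show "vN_entropy (q * density ks phi n * q) \<le> vN_entropy (density ks phi n) + (1 - p)"
    using bounds vN by simp
  show "p \<le> 1" using bounds by simp
  have "real ?N * eta ((1 - p) / real ?N) = (1 - p) * (real n * ln (sum_list ks)) + eta (1 - p)"
    using d \<open>p \<le> 1\<close> by (simp add: eta_divide_scale ln_realpow)
  thus "vN_entropy (density ks phi n) \<le>
      vN_entropy (q * density ks phi n * q) + (1 - p) * (real n * ln (sum_list ks)) + eta (1 - p)"
    using bounds vN by simp
  have "phi n q = phi n (cadj q * q)" using qp unfolding orth_proj_def by simp
  thus "0 \<le> p" using state_positive[OF st d qA] unfolding p_def by simp
qed

lemma entropy_rate_compression_bound: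
  assumes qA: "q \<in> Apow ks n" and qp: "orth_proj q" and n: "n \<ge> 1"
  defines "t \<equiv> 1 - Re (phi n q)"
  shows "\<bar>vN_entropy (q * density ks phi n * q) / n - vN_entropy (density ks phi n) / n\<bar>
    \<le> t * (1 + ln (sum_list ks)) + sqrt t"
proof -
  note bounds = entropy_compression_bounds[OF qA qp, folded t_def]
  define e where "e = t * (1 + ln (sum_list ks)) + sqrt t"
  have t: "0 \<le> t" "t \<le> 1" using bounds(3,4) unfolding t_def by simp_all
  have L: "ln (sum_list ks) \<ge> 0" using d by simp
  have n1: "1 \<le> real n" using n by simp
  have ne: "real n * e = real n * t + t * (real n * ln (sum_list ks)) + real n * sqrt t"
    unfolding e_def by (simp add: algebra_simps)
  have sqrt_t: "0 \<le> sqrt t" using t by simp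
  have "t \<le> e" "0 \<le> e"
    using mult_nonneg_nonneg[OF t(1) L] sqrt_t t unfolding e_def by (simp_all add: distrib_left)
  have "t \<le> e" by fact
  also have "e \<le> real n * e" using mult_right_mono[OF n1 \<open>0 \<le> e\<close>] by simp
  finally have upper: "vN_entropy (q * density ks phi n * q) - vN_entropy (density ks phi n) \<le> real n * e"
    using bounds(1) by simp
  have "sqrt t \<le> real n * sqrt t" using mult_right_mono[OF n1 sqrt_t] by simp
  moreover have "0 \<le> real n * t" using t by simp
  ultimately have lower: "vN_entropy (density ks phi n) - vN_entropy (q * density ks phi n * q) \<le> real n * e"
    using bounds(2) eta_le_sqrt[OF t(1)] ne by linarith
  have "\<bar>vN_entropy (q * density ks phi n * q) - vN_entropy (density ks phi n)\<bar> / real n \<le> e"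
    using upper lower n1 by (simp add: divide_le_eq abs_le_iff mult.commute)
  thus ?thesis unfolding e_def using n1 by (simp add: diff_divide_distrib[symmetric] abs_divide)
qed

end

theorem lemma5:
  fixes ks :: "nat list" and phi :: "nat \<Rightarrow> complex mat \<Rightarrow> complex"
    and q :: "nat \<Rightarrow> complex mat" and s :: real
  assumes "ks \<noteq> []" and "\<forall>k\<in>set ks. k > 0"
    and "stationary_state ks phi"
    and "(\<lambda>n. vN_entropy (density ks phi n) / real n) \<longlonglongrightarrow> s"
    and "\<forall>n. q n \<in> Apow ks n \<and> orth_proj (q n)"
    and "(\<lambda>n. phi n (q n)) \<longlonglongrightarrow> 1"
  shows "(\<lambda>n. vN_entropy (q n * density ks phi n * q n) / real n) \<longlonglongrightarrow> s"
proof -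
  have d: "sum_list ks > 0" using assms(1,2) by (cases ks) auto
  define t where "t n = 1 - Re (phi n (q n))" for n
  define e where "e n = t n * (1 + ln (sum_list ks)) + sqrt (t n)" for n
  define g where "g n = vN_entropy (q n * density ks phi n * q n) / n - vN_entropy (density ks phi n) / n"
    for n
  have "t \<longlonglongrightarrow> 1 - Re 1" unfolding t_def by (intro tendsto_intros assms(6))
  hence "e \<longlonglongrightarrow> 0 * (1 + ln (sum_list ks)) + sqrt 0" unfolding e_def by (intro tendsto_intros) simp_all
  hence e0: "e \<longlonglongrightarrow> 0" by simp
  have "\<bar>g n\<bar> \<le> \<bar>e n\<bar> * 1" if "n \<ge> 1" for n
  proof -
    have "\<bar>g n\<bar> \<le> e n"
      unfolding g_def e_def t_def using assms(5) that
      by (intro entropy_rate_compression_bound[OF assms(3) d]) auto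
    thus ?thesis by simp
  qed
  hence "eventually (\<lambda>n. norm (g n) \<le> norm (e n) * 1) sequentially"
    by (intro eventually_sequentiallyI[of 1]) simp
  hence "g \<longlonglongrightarrow> 0" by (rule tendsto_0_le[OF e0])
  from tendsto_add[OF this assms(4)] show ?thesis by (simp add: g_def)
qed

end
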